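(* Let $\Phi=(A;\{E_i\}_{i=0}^d;A^*;\{E^*_i\}_{i=0}^d)$ be a tridiagonal system on $V$ with $d\ge1$, such that $(A,A^* )$ satisfies the $q$-Serre relations, with $E_iV$ the eigenspace of $A$ for $\theta_i=q^{2i-d}$ and $E^*_iV$ the eigenspace of $A^*$ for $\theta^*_i=q^{d-2i}$. Let $\{U_i\}_{i=0}^d$ be its split decomposition, $K:V\to V$ the linear map acting on $U_i$ as $q^{d-2i}I$, $t$ a scalar, $B=A$, $B^*=tA^*+(1-t)K$, and $E'_i$ the primitive idempotent of $B^*$ for $\theta^*_i$. Then for $0\le i\le d$, $$B^*E_iV\subseteq E_{i-1}V+E_iV+E_{i+1}V\quad(E_{-1}=E_{d+1}=0),\qquad BE'_iV\subseteq E'_{i-1}V+E'_iV+E'_{i+1}V\quad(E'_{-1}=E'_{d+1}=0).$$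
   Context: $\mathcal K$ is an algebraically closed field; $V$ is a nonzero finite-dimensional vector space over $\mathcal K$; $q\in\mathcal K$ is nonzero and not a root of unity; $[3]_q=q^2+1+q^{-2}$. The $q$-Serre relations for $(X,Y)$: $X^3Y-[3]_qX^2YX+[3]_qXYX^2-YX^3=0$ and $Y^3X-[3]_qY^2XY+[3]_qYXY^2-XY^3=0$. Primitive idempotent of a diagonalizable $X$ for eigenvalue $\lambda_i$: $\prod_{j\ne i}\frac{X-\lambda_jI}{\lambda_i-\lambda_j}$. A tridiagonal system on $V$ is a sequence $(A;\{E_i\}_{i=0}^d;A^*;\{E^*_i\}_{i=0}^d)$ with $A,A^*$ diagonalizable, $\{E_i\}$, $\{E^*_i\}$ orderings of their primitive idempotents, $E_iA^*E_j=0$ and $E^*_iAE^*_j=0$ when $|i-j|>1$, and no subspaces other than $0,V$ invariant under both $A$ and $A^*$. Split decomposition: $U_i=(E^*_0V+\cdots+E^*_iV)\cap(E_iV+\cdots+E_dV)$; known: $V=U_0\oplus\cdots\oplus U_d$, $(A-\theta_iI)U_i\subseteq U_{i+1}$, $(A^*-\theta^*_iI)U_i\subseteq U_{i-1}$ ($U_{-1}=U_{d+1}=0$). It is a fact (proved in the paper) that $B^*$ is diagonalizable with eigenvalues $\theta^*_0,\dots,\theta^*_d$, so $E'_i$ is defined. *)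

theory Defs
  imports "Jordan_Normal_Form.Char_Poly" "HOL-Computational_Algebra.Polynomial"
begin

text \<open>Linear maps on V = K^n are n x n matrices; subspaces are sets of vectors.\<close>

definition alg_closed_field :: "'a::field itself \<Rightarrow> bool" where
  "alg_closed_field _ \<longleftrightarrow> (\<forall>p :: 'a poly. degree p \<ge> 1 \<longrightarrow> (\<exists>x. poly p x = 0))"

definition diagonalizable_mat :: "'a::field mat \<Rightarrow> bool" where
  "diagonalizable_mat A \<longleftrightarrow> (\<exists>D. diagonal_mat D \<and> similar_mat A D)"

fun mat_prod_list :: "nat \<Rightarrow> 'a::field mat list \<Rightarrow> 'a mat" where
  "mat_prod_list n [] = 1\<^sub>m n"
| "mat_prod_list n (M # Ms) = M * mat_prod_list n Ms"

definition prim_idem :: "nat \<Rightarrow> nat \<Rightarrow> 'a::field mat \<Rightarrow> (nat \<Rightarrow> 'a) \<Rightarrow> nat \<Rightarrow> 'a mat" where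
  "prim_idem n d X lam i = mat_prod_list n
     (map (\<lambda>j. (1 / (lam i - lam j)) \<cdot>\<^sub>m (X - lam j \<cdot>\<^sub>m 1\<^sub>m n)) (filter (\<lambda>j. j \<noteq> i) [0..<Suc d]))"

definition mat_image :: "nat \<Rightarrow> 'a::field mat \<Rightarrow> 'a vec set" where
  "mat_image n M = {M *\<^sub>v v | v. v \<in> carrier_vec n}"

definition map_image :: "'a::field mat \<Rightarrow> 'a vec set \<Rightarrow> 'a vec set" where
  "map_image M W = {M *\<^sub>v w | w. w \<in> W}"

fun subspace_sum :: "nat \<Rightarrow> 'a::field vec set list \<Rightarrow> 'a vec set" where
  "subspace_sum n [] = {0\<^sub>v n}"
| "subspace_sum n (W # Ws) = {w + u | w u. w \<in> W \<and> u \<in> subspace_sum n Ws}"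

definition is_subspace :: "nat \<Rightarrow> 'a::field vec set \<Rightarrow> bool" where
  "is_subspace n W \<longleftrightarrow> W \<subseteq> carrier_vec n \<and> 0\<^sub>v n \<in> W \<and>
     (\<forall>u\<in>W. \<forall>w\<in>W. u + w \<in> W) \<and> (\<forall>c. \<forall>w\<in>W. c \<cdot>\<^sub>v w \<in> W)"

definition invariant_sub :: "'a::field mat \<Rightarrow> 'a vec set \<Rightarrow> bool" where
  "invariant_sub M W \<longleftrightarrow> (\<forall>w\<in>W. M *\<^sub>v w \<in> W)"

definition tridiagonal_system ::
  "nat \<Rightarrow> nat \<Rightarrow> 'a::field mat \<Rightarrow> (nat \<Rightarrow> 'a) \<Rightarrow> 'a mat \<Rightarrow> (nat \<Rightarrow> 'a) \<Rightarrow> bool" where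
  "tridiagonal_system n d A th As ths \<longleftrightarrow>
     A \<in> carrier_mat n n \<and> As \<in> carrier_mat n n \<and>
     diagonalizable_mat A \<and> diagonalizable_mat As \<and>
     inj_on th {0..d} \<and> inj_on ths {0..d} \<and>
     {k. eigenvalue A k} = th ` {0..d} \<and> {k. eigenvalue As k} = ths ` {0..d} \<and>
     (\<forall>i\<le>d. \<forall>j\<le>d. (i > j + 1 \<or> j > i + 1) \<longrightarrow>
        prim_idem n d A th i * As * prim_idem n d A th j = 0\<^sub>m n n) \<and>
     (\<forall>i\<le>d. \<forall>j\<le>d. (i > j + 1 \<or> j > i + 1) \<longrightarrow>
        prim_idem n d As ths i * A * prim_idem n d As ths j = 0\<^sub>m n n) \<and>
     (\<forall>W. is_subspace n W \<and> invariant_sub A W \<and> invariant_sub As W \<longrightarrow>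
        W = {0\<^sub>v n} \<or> W = carrier_vec n)"

definition split_comp ::
  "nat \<Rightarrow> nat \<Rightarrow> 'a::field mat \<Rightarrow> (nat \<Rightarrow> 'a) \<Rightarrow> 'a mat \<Rightarrow> (nat \<Rightarrow> 'a) \<Rightarrow> nat \<Rightarrow> 'a vec set" where
  "split_comp n d A th As ths i =
     subspace_sum n (map (\<lambda>k. mat_image n (prim_idem n d As ths k)) [0..<Suc i]) \<inter>
     subspace_sum n (map (\<lambda>k. mat_image n (prim_idem n d A th k)) [i..<Suc d])"

text \<open>E_{i-1}V + E_iV + E_{i+1}V with E_{-1} = E_{d+1} = 0.\<close>
definition nbr_sum :: "nat \<Rightarrow> nat \<Rightarrow> 'a::field mat \<Rightarrow> (nat \<Rightarrow> 'a) \<Rightarrow> nat \<Rightarrow> 'a vec set" where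
  "nbr_sum n d X lam i = subspace_sum n
     (map (\<lambda>k. mat_image n (prim_idem n d X lam k)) (filter (\<lambda>k. i \<le> k + 1 \<and> k \<le> i + 1) [0..<Suc d]))"

definition q_serre :: "'a::field \<Rightarrow> 'a mat \<Rightarrow> 'a mat \<Rightarrow> bool" where
  "q_serre q X Y \<longleftrightarrow> (let c = q^2 + 1 + inverse (q^2) in
     X*X*X*Y - c \<cdot>\<^sub>m (X*X*Y*X) + c \<cdot>\<^sub>m (X*Y*X*X) - Y*X*X*X = 0\<^sub>m (dim_row X) (dim_row X) \<and>
     Y*Y*Y*X - c \<cdot>\<^sub>m (Y*Y*X*Y) + c \<cdot>\<^sub>m (Y*X*Y*Y) - X*Y*Y*Y = 0\<^sub>m (dim_row X) (dim_row X))"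

end

theory Submission
  imports Defs
begin

text \<open>
  Let \<open>U\<^sub>0, ..., U\<^sub>d\<close> be the split decomposition. On \<open>U\<^sub>i\<close> the map \<open>A - \<theta>\<^sub>i\<close> raises into
  \<open>U\<^sub>i\<^sub>+\<^sub>1\<close>, \<open>A\<^sup>* - \<theta>\<^sup>*\<^sub>i\<close> lowers into \<open>U\<^sub>i\<^sub>-\<^sub>1\<close>, and \<open>K\<close> acts as \<open>\<theta>\<^sup>*\<^sub>i\<close>; irreducibility makes the \<open>U\<^sub>i\<close> span \<open>V\<close>.
  Since \<open>\<theta>\<^sub>i \<theta>\<^sup>*\<^sub>i = 1\<close> and \<open>\<theta>\<^sub>i\<^sub>+\<^sub>1 = q\<^sup>2 \<theta>\<^sub>i\<close>, checking on each \<open>U\<^sub>i\<close> gives the q-Weyl relations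
  \<open>q\<^sup>2 K A - A K = (q\<^sup>2 - 1) I\<close> and \<open>A\<^sup>* K\<^sup>-\<^sup>1 - q\<^sup>2 K\<^sup>-\<^sup>1 A\<^sup>* = (1 - q\<^sup>2) I\<close>.
  A relation \<open>a X M + b M X = c I\<close> sandwiched between primitive idempotents of \<open>X\<close> gives
  \<open>E\<^sub>j M E\<^sub>i = 0\<close> whenever \<open>j \<noteq> i\<close> and \<open>a \<lambda>\<^sub>j + b \<lambda>\<^sub>i \<noteq> 0\<close>; as \<open>q\<close> is not a root of unity this
  holds for \<open>|i - j| > 1\<close>. With the tridiagonality of \<open>A\<^sup>*\<close> this is the first inclusion.
  For the second, if \<open>t = 0\<close> then \<open>B\<^sup>* = K\<close> and the first relation suffices. If \<open>t \<noteq> 0\<close>, the map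
  \<open>D\<close> acting on \<open>U\<^sub>i\<close> as \<open>t\<^sup>i\<close> satisfies \<open>B\<^sup>* = D\<^sup>-\<^sup>1 A\<^sup>* D\<close> and \<open>D A D\<^sup>-\<^sup>1 = (1 - t) K\<^sup>-\<^sup>1 + t A\<close>,
  so \<open>E'\<^sub>i = D\<^sup>-\<^sup>1 E\<^sup>*\<^sub>i D\<close> and \<open>E'\<^sub>j A E'\<^sub>i = D\<^sup>-\<^sup>1 E\<^sup>*\<^sub>j ((1 - t) K\<^sup>-\<^sup>1 + t A) E\<^sup>*\<^sub>i D\<close> vanishes by the
  second relation and the tridiagonality of \<open>A\<close>.
\<close>

lemma smult_mat_mult_vec:
  "A \<in> carrier_mat nr nc \<Longrightarrow> v \<in> carrier_vec nc \<Longrightarrow> (c \<cdot>\<^sub>m A) *\<^sub>v v = c \<cdot>\<^sub>v (A *\<^sub>v v)"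
  by (intro eq_vecI) (auto simp: scalar_prod_def sum_distrib_left mult.assoc)

lemma mult_mat_vec_zero [simp]: "dim_col A = n \<Longrightarrow> A *\<^sub>v 0\<^sub>v n = 0\<^sub>v (dim_row A)"
  by (intro eq_vecI) (auto simp: scalar_prod_def)

lemma smult_zero_vec [simp]: "c \<cdot>\<^sub>v 0\<^sub>v n = (0\<^sub>v n :: 'a::comm_ring vec)"
  by (intro eq_vecI) auto

lemma smult_vec_eq_zero_iff:
  "v \<in> carrier_vec n \<Longrightarrow> c \<cdot>\<^sub>v v = 0\<^sub>v n \<longleftrightarrow> c = 0 \<or> v = (0\<^sub>v n :: 'a::field vec)"
  by (auto simp: vec_eq_iff)

lemma assoc_mult_mat_mat_vec:
  "A \<in> carrier_mat n1 n2 \<Longrightarrow> B \<in> carrier_mat n2 n3 \<Longrightarrow> C \<in> carrier_mat n3 n4 \<Longrightarrow>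
   v \<in> carrier_vec n4 \<Longrightarrow> (A * B * C) *\<^sub>v v = A *\<^sub>v (B *\<^sub>v (C *\<^sub>v v))"
proof -
  assume A: "A \<in> carrier_mat n1 n2" and B: "B \<in> carrier_mat n2 n3" and C: "C \<in> carrier_mat n3 n4"
    and v: "v \<in> carrier_vec n4"
  have "(A * B * C) *\<^sub>v v = (A * B) *\<^sub>v (C *\<^sub>v v)"
    by (rule assoc_mult_mat_vec[OF mult_carrier_mat[OF A B] C v])
  also have "\<dots> = A *\<^sub>v (B *\<^sub>v (C *\<^sub>v v))"
    by (rule assoc_mult_mat_vec[OF A B mult_mat_vec_carrier[OF C v]])
  finally show ?thesis .
qed

lemma mult_mat_vec_left_inverse:
  "P \<in> carrier_mat n n \<Longrightarrow> Q \<in> carrier_mat n n \<Longrightarrow> Q * P = 1\<^sub>m n \<Longrightarrow> v \<in> carrier_vec n \<Longrightarrow>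
   Q *\<^sub>v (P *\<^sub>v v) = (v :: 'a::semiring_1 vec)"
  by (simp flip: assoc_mult_mat_vec[of Q n n P n v])

lemma zero_mat_mult_vec [simp]: "v \<in> carrier_vec nc \<Longrightarrow> 0\<^sub>m nr nc *\<^sub>v v = 0\<^sub>v nr"
  by (intro eq_vecI) auto

lemma mult_mat_vec_lincomb_products:
  assumes "X \<in> carrier_mat n n" "Y \<in> carrier_mat n n" "v \<in> carrier_vec n"
  shows "(a \<cdot>\<^sub>m (X * Y) + b \<cdot>\<^sub>m (Y * X)) *\<^sub>v v = a \<cdot>\<^sub>v (X *\<^sub>v (Y *\<^sub>v v)) + b \<cdot>\<^sub>v (Y *\<^sub>v (X *\<^sub>v v))"
  using assms by (simp add: add_mult_distrib_mat_vec[of _ n n] smult_mat_mult_vec[of _ n n])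

lemma eq_mat_on_vecI:
  fixes A B :: "'a::field mat"
  assumes "A \<in> carrier_mat nr nc" "B \<in> carrier_mat nr nc"
    and "\<And>v. v \<in> carrier_vec nc \<Longrightarrow> A *\<^sub>v v = B *\<^sub>v v"
  shows "A = B"
proof (rule eq_matI)
  fix i j assume "i < dim_row B" "j < dim_col B"
  then have "(A *\<^sub>v unit_vec nc j) $ i = A $$ (i, j)" "(B *\<^sub>v unit_vec nc j) $ i = B $$ (i, j)"
    using assms(1,2) by auto
  then show "A $$ (i, j) = B $$ (i, j)" using assms(3)[of "unit_vec nc j"] by simp
qed (use assms in auto)

lemma finsum_vec_eq_vec:
  assumes "finite F" "\<And>k. k \<in> F \<Longrightarrow> f k \<in> carrier_vec n"
  shows "finsum_vec TYPE('a::comm_monoid_add) n f F = vec n (\<lambda>i. \<Sum>k\<in>F. f k $ i)"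
proof -
  have "finsum_vec TYPE('a) n f F \<in> carrier_vec n"
    using assms by (intro finsum_vec_closed) auto
  then show ?thesis using assms by (intro eq_vecI) (auto simp: index_finsum_vec)
qed

lemma mult_mat_finsum_vec:
  fixes M :: "'a::comm_semiring_0 mat"
  assumes M: "M \<in> carrier_mat nr n" and F: "finite F" and f: "\<And>k. k \<in> F \<Longrightarrow> f k \<in> carrier_vec n"
  shows "M *\<^sub>v finsum_vec TYPE('a) n f F = finsum_vec TYPE('a) nr (\<lambda>k. M *\<^sub>v f k) F"
proof -
  have "row M i \<bullet> vec n (\<lambda>l. \<Sum>k\<in>F. f k $ l) = (\<Sum>k\<in>F. row M i \<bullet> f k)" if "i < nr" for i
  proof -
    have "row M i \<bullet> vec n (\<lambda>l. \<Sum>k\<in>F. f k $ l) = (\<Sum>l<n. \<Sum>k\<in>F. M $$ (i, l) * f k $ l)"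
      using M that by (simp add: scalar_prod_def sum_distrib_left lessThan_atLeast0)
    also have "\<dots> = (\<Sum>k\<in>F. row M i \<bullet> f k)"
      using M f[THEN carrier_vecD] that
      by (subst sum.swap) (auto simp: scalar_prod_def lessThan_atLeast0 intro!: sum.cong)
    finally show ?thesis .
  qed
  then show ?thesis
    using M f by (auto simp: finsum_vec_eq_vec[OF F] intro!: eq_vecI)
qed

lemma finsum_vec_cong:
  assumes "finite F" "\<And>k. k \<in> F \<Longrightarrow> f k \<in> carrier_vec n" "\<And>k. k \<in> F \<Longrightarrow> f k = g k"
  shows "finsum_vec TYPE('a::comm_monoid_add) n f F = finsum_vec TYPE('a) n g F"
  using assms by (simp add: finsum_vec_eq_vec)

lemma finsum_vec_delta:
  assumes "finite F" "k \<in> F" "u \<in> carrier_vec n"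
  shows "finsum_vec TYPE('a::comm_monoid_add) n (\<lambda>j. if j = k then u else 0\<^sub>v n) F = u"
proof -
  have "(\<Sum>j\<in>F. (if j = k then u else 0\<^sub>v n) $ i) = u $ i" if "i < n" for i
    using assms that by (simp add: if_distrib[of "\<lambda>v. v $ i"] cong: if_cong)
  then show ?thesis using assms by (subst finsum_vec_eq_vec) (auto intro!: eq_vecI)
qed

lemma finsum_vec_zero: "finite F \<Longrightarrow> finsum_vec TYPE('a::comm_monoid_add) n (\<lambda>_. 0\<^sub>v n) F = 0\<^sub>v n"
  by (simp add: finsum_vec_eq_vec vec_eq_iff)

lemma finsum_vec_add:
  assumes F: "finite F" and f: "\<And>k. k \<in> F \<Longrightarrow> f k \<in> carrier_vec n" and g: "\<And>k. k \<in> F \<Longrightarrow> g k \<in> carrier_vec n"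
  shows "finsum_vec TYPE('a::comm_monoid_add) n (\<lambda>k. f k + g k) F
    = finsum_vec TYPE('a) n f F + finsum_vec TYPE('a) n g F"
proof -
  have "(\<Sum>k\<in>F. (f k + g k) $ i) = (\<Sum>k\<in>F. f k $ i) + (\<Sum>k\<in>F. g k $ i)" if "i < n" for i
    using that f[THEN carrier_vecD] g[THEN carrier_vecD] by (simp add: sum.distrib)
  then show ?thesis using F f g by (simp add: finsum_vec_eq_vec vec_eq_iff)
qed

lemma finsum_vec_smult:
  assumes F: "finite F" and f: "\<And>k. k \<in> F \<Longrightarrow> f k \<in> carrier_vec n"
  shows "finsum_vec TYPE('a::comm_ring) n (\<lambda>k. c \<cdot>\<^sub>v f k) F = c \<cdot>\<^sub>v finsum_vec TYPE('a) n f F"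
proof -
  have "(\<Sum>k\<in>F. (c \<cdot>\<^sub>v f k) $ i) = c * (\<Sum>k\<in>F. f k $ i)" if "i < n" for i
    using that f[THEN carrier_vecD] by (simp add: sum_distrib_left)
  then show ?thesis using F f by (simp add: finsum_vec_eq_vec vec_eq_iff)
qed

lemma is_subspace_finsum_vec:
  assumes W: "is_subspace n W" and F: "finite F" and f: "\<And>k. k \<in> F \<Longrightarrow> f k \<in> W"
  shows "finsum_vec TYPE('a::field) n f F \<in> W"
  using F f
proof (induction F)
  case empty
  then show ?case using W by (simp add: is_subspace_def finsum_vec_empty)
next
  case (insert k F)
  have "f \<in> F \<rightarrow> carrier_vec n" "f k \<in> carrier_vec n"
    using insert.prems W by (auto simp: is_subspace_def)
  then show ?case using insert W by (simp add: finsum_vec_insert is_subspace_def)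
qed

definition family_sum :: "nat \<Rightarrow> ('i \<Rightarrow> 'a::field vec set) \<Rightarrow> 'i set \<Rightarrow> 'a vec set" where
  "family_sum n S F = {finsum_vec TYPE('a) n g F | g. \<forall>k\<in>F. g k \<in> S k}"

context
  fixes n :: nat and S :: "'i \<Rightarrow> 'a::field vec set" and F :: "'i set"
  assumes finite_F: "finite F" and subspaces: "\<And>k. k \<in> F \<Longrightarrow> is_subspace n (S k)"
begin

lemma family_subspace_closed:
  assumes "k \<in> F"
  shows "u \<in> S k \<Longrightarrow> u \<in> carrier_vec n" and "0\<^sub>v n \<in> S k"
    and "u \<in> S k \<Longrightarrow> w \<in> S k \<Longrightarrow> u + w \<in> S k" and "w \<in> S k \<Longrightarrow> c \<cdot>\<^sub>v w \<in> S k"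
  using subspaces[OF assms] unfolding is_subspace_def by auto

lemma family_member_carrier: "\<forall>k\<in>F. g k \<in> S k \<Longrightarrow> k \<in> F \<Longrightarrow> g k \<in> carrier_vec n"
  using family_subspace_closed(1) by blast

lemma family_sum_carrier: "family_sum n S F \<subseteq> carrier_vec n"
  using finite_F family_member_carrier by (auto simp: family_sum_def intro!: finsum_vec_closed)

lemma is_subspace_family_sum: "is_subspace n (family_sum n S F)"
proof -
  have "0\<^sub>v n \<in> family_sum n S F"
    unfolding family_sum_def
    using finite_F family_subspace_closed(2)
    by (intro CollectI exI[of _ "\<lambda>_. 0\<^sub>v n"]) (auto simp: finsum_vec_eq_vec intro!: eq_vecI)
  moreover have "u + w \<in> family_sum n S F" if uw: "u \<in> family_sum n S F" "w \<in> family_sum n S F" for u w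
  proof -
    obtain g h where g: "\<forall>k\<in>F. g k \<in> S k" "u = finsum_vec TYPE('a) n g F"
      and h: "\<forall>k\<in>F. h k \<in> S k" "w = finsum_vec TYPE('a) n h F"
      using uw unfolding family_sum_def by blast
    have "u + w = finsum_vec TYPE('a) n (\<lambda>k. g k + h k) F"
      using g h family_member_carrier finite_F by (simp add: finsum_vec_add)
    moreover have "\<forall>k\<in>F. g k + h k \<in> S k" using g h family_subspace_closed(3) by blast
    ultimately show ?thesis unfolding family_sum_def by blast
  qed
  moreover have "c \<cdot>\<^sub>v u \<in> family_sum n S F" if u: "u \<in> family_sum n S F" for c u
  proof -
    obtain g where g: "\<forall>k\<in>F. g k \<in> S k" "u = finsum_vec TYPE('a) n g F"
      using u unfolding family_sum_def by blast
    have "c \<cdot>\<^sub>v u = finsum_vec TYPE('a) n (\<lambda>k. c \<cdot>\<^sub>v g k) F"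
      using g family_member_carrier finite_F by (simp add: finsum_vec_smult)
    moreover have "\<forall>k\<in>F. c \<cdot>\<^sub>v g k \<in> S k" using g family_subspace_closed(4) by blast
    ultimately show ?thesis unfolding family_sum_def by blast
  qed
  ultimately show ?thesis using family_sum_carrier unfolding is_subspace_def by blast
qed

lemma subset_family_sum: "k \<in> F \<Longrightarrow> S k \<subseteq> family_sum n S F"
proof
  fix u assume k: "k \<in> F" and u: "u \<in> S k"
  let ?g = "\<lambda>j. if j = k then u else 0\<^sub>v n"
  have "u \<in> carrier_vec n" using k u family_subspace_closed(1) by blast
  then have "u = finsum_vec TYPE('a) n ?g F" using k finite_F by (simp add: finsum_vec_delta)
  moreover have "\<forall>j\<in>F. ?g j \<in> S j" using k u family_subspace_closed(2) by auto
  ultimately show "u \<in> family_sum n S F" unfolding family_sum_def by blast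
qed

lemma invariant_family_sum:
  assumes M: "M \<in> carrier_mat n n" and maps: "\<And>k u. k \<in> F \<Longrightarrow> u \<in> S k \<Longrightarrow> M *\<^sub>v u \<in> family_sum n S F"
  shows "invariant_sub M (family_sum n S F)"
  unfolding invariant_sub_def
proof
  fix w assume "w \<in> family_sum n S F"
  then obtain g where g: "\<forall>k\<in>F. g k \<in> S k" and w: "w = finsum_vec TYPE('a) n g F"
    unfolding family_sum_def by auto
  have "M *\<^sub>v w = finsum_vec TYPE('a) n (\<lambda>k. M *\<^sub>v g k) F"
    unfolding w using M g finite_F family_member_carrier by (intro mult_mat_finsum_vec) auto
  also have "\<dots> \<in> family_sum n S F"
    using g maps finite_F is_subspace_family_sum by (intro is_subspace_finsum_vec) auto
  finally show "M *\<^sub>v w \<in> family_sum n S F" .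
qed

end

lemma mat_prod_list_carrier:
  "(\<And>x. x \<in> set xs \<Longrightarrow> F x \<in> carrier_mat n n) \<Longrightarrow> mat_prod_list n (map F xs) \<in> carrier_mat n n"
  by (induction xs) (auto intro!: mult_carrier_mat)

lemma mat_prod_list_mult_eigenvector:
  assumes u: "u \<in> carrier_vec n"
    and F: "\<And>x. x \<in> set xs \<Longrightarrow> F x \<in> carrier_mat n n \<and> F x *\<^sub>v u = c x \<cdot>\<^sub>v u"
  shows "mat_prod_list n (map F xs) *\<^sub>v u = prod_list (map c xs) \<cdot>\<^sub>v (u :: 'a::field vec)"
  using F
proof (induction xs)
  case (Cons x xs)
  have P: "mat_prod_list n (map F xs) \<in> carrier_mat n n"
    using Cons.prems by (auto intro: mat_prod_list_carrier)
  have Fx: "F x \<in> carrier_mat n n" "F x *\<^sub>v u = c x \<cdot>\<^sub>v u" using Cons.prems by auto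
  have "mat_prod_list n (map F (x # xs)) *\<^sub>v u = F x *\<^sub>v (prod_list (map c xs) \<cdot>\<^sub>v u)"
    using assoc_mult_mat_vec[OF Fx(1) P u] Cons.IH Cons.prems by simp
  also have "\<dots> = prod_list (map c (x # xs)) \<cdot>\<^sub>v u"
    using Fx u by (simp add: mult_mat_vec smult_smult_assoc mult.commute)
  finally show ?case .
qed (use u in simp)

lemma prim_idem_carrier [simp]: "X \<in> carrier_mat n n \<Longrightarrow> prim_idem n d X lam i \<in> carrier_mat n n"
  unfolding prim_idem_def by (rule mat_prod_list_carrier) auto

lemma prim_idem_mult_eigenvector:
  fixes X :: "'a::field mat"
  assumes X: "X \<in> carrier_mat n n" and inj: "inj_on lam {0..d}"
    and u: "u \<in> carrier_vec n" "X *\<^sub>v u = lam k \<cdot>\<^sub>v u" and k: "k \<le> d" and j: "j \<le> d"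
  shows "prim_idem n d X lam j *\<^sub>v u = (if j = k then u else 0\<^sub>v n)"
proof -
  let ?c = "\<lambda>x. (lam k - lam x) / (lam j - lam x)"
  have factor: "(1 / (lam j - lam x)) \<cdot>\<^sub>m (X - lam x \<cdot>\<^sub>m 1\<^sub>m n) *\<^sub>v u = ?c x \<cdot>\<^sub>v u" for x
  proof -
    have "(X - lam x \<cdot>\<^sub>m 1\<^sub>m n) *\<^sub>v u = (lam k - lam x) \<cdot>\<^sub>v u"
      using X u by (auto simp: minus_mult_distrib_mat_vec[of _ n n] smult_mat_mult_vec[of _ n n]
          vec_eq_iff algebra_simps)
    moreover have "X - lam x \<cdot>\<^sub>m 1\<^sub>m n \<in> carrier_mat n n" using X by (simp add: minus_carrier_mat)
    ultimately show ?thesis using u by (simp add: smult_mat_mult_vec smult_smult_assoc)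
  qed
  have "prim_idem n d X lam j *\<^sub>v u = (\<Prod>x\<in>{0..d} - {j}. ?c x) \<cdot>\<^sub>v u"
  proof -
    let ?xs = "filter (\<lambda>x. x \<noteq> j) [0..<Suc d]"
    have "prod_list (map ?c ?xs) = prod ?c (set ?xs)"
      by (rule prod.distinct_set_conv_list[symmetric]) simp
    also have "set ?xs = {0..d} - {j}" by auto
    finally show ?thesis
      unfolding prim_idem_def using X factor
      by (subst mat_prod_list_mult_eigenvector[OF u(1)]) auto
  qed
  also have "\<dots> = (if j = k then u else 0\<^sub>v n)"
  proof (cases "j = k")
    case True
    have "lam j \<noteq> lam x" if "x \<in> {0..d} - {j}" for x
      using inj j that by (auto dest: inj_onD)
    then show ?thesis using True by simp
  next
    case False
    have c0: "(\<Prod>x\<in>{0..d} - {j}. ?c x) = 0" using False k by (intro prod_zero) auto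
    show ?thesis using False u by (subst c0) (auto intro!: eq_vecI)
  qed
  finally show ?thesis .
qed

subsection \<open>Diagonalizable matrices with prescribed eigenvalues\<close>

text \<open>\<open>X\<close> is diagonalizable with eigenvalues among the pairwise distinct \<open>lam 0, ..., lam d\<close>;
  then \<open>E j\<close> is the projection onto the \<open>lam j\<close>-eigenspace along the others.\<close>

locale eigen_decomp =
  fixes n d :: nat and X :: "'a::field mat" and lam :: "nat \<Rightarrow> 'a"
  assumes carrier_X: "X \<in> carrier_mat n n" and inj_lam: "inj_on lam {0..d}"
    and decomp: "\<And>v. v \<in> carrier_vec n \<Longrightarrow> \<exists>f. (\<forall>k\<le>d. f k \<in> carrier_vec n \<and> X *\<^sub>v f k = lam k \<cdot>\<^sub>v f k)
        \<and> v = finsum_vec TYPE('a) n f {0..d}"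
begin

abbreviation E :: "nat \<Rightarrow> 'a mat" where
  "E j \<equiv> prim_idem n d X lam j"

lemma idem_carrier [simp]: "E j \<in> carrier_mat n n"
  using carrier_X by simp

lemma idem_dim [simp]: "dim_row (E j) = n" "dim_col (E j) = n"
  using carrier_matD[OF idem_carrier] by auto

lemma idem_mult_vec_carrier [simp]: "v \<in> carrier_vec n \<Longrightarrow> E j *\<^sub>v v \<in> carrier_vec n"
  by (rule mult_mat_vec_carrier[OF idem_carrier])

lemma idem_mult_eigenvector:
  "u \<in> carrier_vec n \<Longrightarrow> X *\<^sub>v u = lam k \<cdot>\<^sub>v u \<Longrightarrow> k \<le> d \<Longrightarrow> j \<le> d \<Longrightarrow>
   E j *\<^sub>v u = (if j = k then u else 0\<^sub>v n)"
  using prim_idem_mult_eigenvector[OF carrier_X inj_lam] by blast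

lemma idem_finsum_eigenvectors:
  assumes f: "\<forall>k\<le>d. f k \<in> carrier_vec n \<and> X *\<^sub>v f k = lam k \<cdot>\<^sub>v f k" and j: "j \<le> d"
  shows "E j *\<^sub>v finsum_vec TYPE('a) n f {0..d} = f j"
proof -
  have "E j *\<^sub>v finsum_vec TYPE('a) n f {0..d} = finsum_vec TYPE('a) n (\<lambda>k. E j *\<^sub>v f k) {0..d}"
    using f by (intro mult_mat_finsum_vec) auto
  also have "\<dots> = finsum_vec TYPE('a) n (\<lambda>k. if k = j then f j else 0\<^sub>v n) {0..d}"
    using f j by (intro finsum_vec_cong) (auto simp: idem_mult_eigenvector)
  also have "\<dots> = f j" using f j by (intro finsum_vec_delta) auto
  finally show ?thesis .
qed

lemma finsum_idem:
  assumes v: "v \<in> carrier_vec n"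
  shows "finsum_vec TYPE('a) n (\<lambda>j. E j *\<^sub>v v) {0..d} = v"
proof -
  obtain f where f: "\<forall>k\<le>d. f k \<in> carrier_vec n \<and> X *\<^sub>v f k = lam k \<cdot>\<^sub>v f k"
    and v_eq: "v = finsum_vec TYPE('a) n f {0..d}"
    using decomp[OF v] by blast
  have "finsum_vec TYPE('a) n (\<lambda>j. E j *\<^sub>v v) {0..d} = finsum_vec TYPE('a) n f {0..d}"
    using f v by (intro finsum_vec_cong) (auto simp: v_eq idem_finsum_eigenvectors)
  then show ?thesis using v_eq by simp
qed

lemma mult_idem:
  assumes v: "v \<in> carrier_vec n" and k: "k \<le> d"
  shows "X *\<^sub>v (E k *\<^sub>v v) = lam k \<cdot>\<^sub>v (E k *\<^sub>v v)"
proof -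
  obtain f where f: "\<forall>k\<le>d. f k \<in> carrier_vec n \<and> X *\<^sub>v f k = lam k \<cdot>\<^sub>v f k"
    and v_eq: "v = finsum_vec TYPE('a) n f {0..d}"
    using decomp[OF v] by blast
  show ?thesis using idem_finsum_eigenvectors[OF f k] f k v_eq by simp
qed

lemma idem_idem:
  "v \<in> carrier_vec n \<Longrightarrow> j \<le> d \<Longrightarrow> k \<le> d \<Longrightarrow> E j *\<^sub>v (E k *\<^sub>v v) = (if j = k then E k *\<^sub>v v else 0\<^sub>v n)"
  by (simp add: idem_mult_eigenvector mult_idem)

lemma idem_mult:
  assumes v: "v \<in> carrier_vec n" and j: "j \<le> d"
  shows "E j *\<^sub>v (X *\<^sub>v v) = lam j \<cdot>\<^sub>v (E j *\<^sub>v v)"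
proof -
  obtain f where f: "\<forall>k\<le>d. f k \<in> carrier_vec n \<and> X *\<^sub>v f k = lam k \<cdot>\<^sub>v f k"
    and v_eq: "v = finsum_vec TYPE('a) n f {0..d}"
    using decomp[OF v] by blast
  have Xf: "\<forall>k\<le>d. lam k \<cdot>\<^sub>v f k \<in> carrier_vec n \<and> X *\<^sub>v (lam k \<cdot>\<^sub>v f k) = lam k \<cdot>\<^sub>v (lam k \<cdot>\<^sub>v f k)"
    using f carrier_X by (auto simp: mult_mat_vec)
  have "X *\<^sub>v v = finsum_vec TYPE('a) n (\<lambda>k. X *\<^sub>v f k) {0..d}"
    unfolding v_eq using f carrier_X by (intro mult_mat_finsum_vec) auto
  also have "\<dots> = finsum_vec TYPE('a) n (\<lambda>k. lam k \<cdot>\<^sub>v f k) {0..d}"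
    using f carrier_X by (intro finsum_vec_cong) auto
  finally have "X *\<^sub>v v = finsum_vec TYPE('a) n (\<lambda>k. lam k \<cdot>\<^sub>v f k) {0..d}" .
  then show ?thesis
    using idem_finsum_eigenvectors[OF Xf j] idem_finsum_eigenvectors[OF f j] v_eq by simp
qed

lemma eq_zero_if_idem_zero:
  assumes v: "v \<in> carrier_vec n" and zero: "\<forall>j\<le>d. E j *\<^sub>v v = 0\<^sub>v n"
  shows "v = 0\<^sub>v n"
proof -
  have "v = finsum_vec TYPE('a) n (\<lambda>j. E j *\<^sub>v v) {0..d}" using finsum_idem[OF v] by simp
  also have "\<dots> = finsum_vec TYPE('a) n (\<lambda>_. 0\<^sub>v n) {0..d}"
    using v zero by (intro finsum_vec_cong) auto
  finally show ?thesis by (simp add: finsum_vec_zero)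
qed

lemma idem_mult_eq_zero_if_sandwiches_zero:
  assumes M: "M \<in> carrier_mat n n" and v: "v \<in> carrier_vec n"
    and zero: "\<And>m. m \<le> d \<Longrightarrow> E j *\<^sub>v (M *\<^sub>v (E m *\<^sub>v v)) = 0\<^sub>v n"
  shows "E j *\<^sub>v (M *\<^sub>v v) = 0\<^sub>v n"
proof -
  have "M *\<^sub>v v = finsum_vec TYPE('a) n (\<lambda>m. M *\<^sub>v (E m *\<^sub>v v)) {0..d}"
    using mult_mat_finsum_vec[OF M, of "{0..d}" "\<lambda>m. E m *\<^sub>v v"] v by (simp add: finsum_idem)
  then have "E j *\<^sub>v (M *\<^sub>v v) = finsum_vec TYPE('a) n (\<lambda>m. E j *\<^sub>v (M *\<^sub>v (E m *\<^sub>v v))) {0..d}"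
    using M v by (simp add: mult_mat_finsum_vec)
  also have "\<dots> = finsum_vec TYPE('a) n (\<lambda>_. 0\<^sub>v n) {0..d}"
    using M v zero by (intro finsum_vec_cong) auto
  finally show ?thesis by (simp add: finsum_vec_zero)
qed

lemma mem_subspace_sum_images_iff:
  assumes "set xs \<subseteq> {..d}"
  shows "v \<in> subspace_sum n (map (\<lambda>k. mat_image n (E k)) xs) \<longleftrightarrow>
     v \<in> carrier_vec n \<and> (\<forall>j\<le>d. j \<notin> set xs \<longrightarrow> E j *\<^sub>v v = 0\<^sub>v n)"
  using assms
proof (induction xs arbitrary: v)
  case Nil
  then show ?case using eq_zero_if_idem_zero by auto
next
  case (Cons x xs)
  then have x: "x \<le> d" and IH: "\<And>v. v \<in> subspace_sum n (map (\<lambda>k. mat_image n (E k)) xs) \<longleftrightarrow>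
     v \<in> carrier_vec n \<and> (\<forall>j\<le>d. j \<notin> set xs \<longrightarrow> E j *\<^sub>v v = 0\<^sub>v n)" by auto
  show ?case
  proof
    assume "v \<in> subspace_sum n (map (\<lambda>k. mat_image n (E k)) (x # xs))"
    then obtain w u where v: "v = E x *\<^sub>v w + u" and w: "w \<in> carrier_vec n"
      and "u \<in> subspace_sum n (map (\<lambda>k. mat_image n (E k)) xs)"
      by (auto simp: mat_image_def)
    then have u: "u \<in> carrier_vec n" "\<forall>j\<le>d. j \<notin> set xs \<longrightarrow> E j *\<^sub>v u = 0\<^sub>v n"
      using IH by auto
    have "E j *\<^sub>v v = 0\<^sub>v n" if "j \<le> d" "j \<notin> set (x # xs)" for j
      using that x u w by (simp add: v mult_add_distrib_mat_vec[of _ n n] idem_idem)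
    then show "v \<in> carrier_vec n \<and> (\<forall>j\<le>d. j \<notin> set (x # xs) \<longrightarrow> E j *\<^sub>v v = 0\<^sub>v n)"
      using v w u by auto
  next
    assume v: "v \<in> carrier_vec n \<and> (\<forall>j\<le>d. j \<notin> set (x # xs) \<longrightarrow> E j *\<^sub>v v = 0\<^sub>v n)"
    have "E j *\<^sub>v (v - E x *\<^sub>v v) = 0\<^sub>v n" if "j \<le> d" "j \<notin> set xs" for j
      using that x v by (cases "j = x") (auto simp: mult_minus_distrib_mat_vec[of _ n n] idem_idem)
    then have "v - E x *\<^sub>v v \<in> subspace_sum n (map (\<lambda>k. mat_image n (E k)) xs)"
      using v IH by simp
    moreover have "E x *\<^sub>v v \<in> mat_image n (E x)" using v unfolding mat_image_def by auto
    moreover have "v = E x *\<^sub>v v + (v - E x *\<^sub>v v)" using v by (auto intro!: eq_vecI)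
    ultimately show "v \<in> subspace_sum n (map (\<lambda>k. mat_image n (E k)) (x # xs))" by force
  qed
qed

lemma map_image_subset_nbr_sum:
  assumes M: "M \<in> carrier_mat n n" and i: "i \<le> d"
    and far: "\<And>j v. j \<le> d \<Longrightarrow> j + 1 < i \<or> i + 1 < j \<Longrightarrow> v \<in> carrier_vec n \<Longrightarrow>
        E j *\<^sub>v (M *\<^sub>v (E i *\<^sub>v v)) = 0\<^sub>v n"
  shows "map_image M (mat_image n (E i)) \<subseteq> nbr_sum n d X lam i"
proof
  fix z assume "z \<in> map_image M (mat_image n (E i))"
  then obtain v where v: "v \<in> carrier_vec n" and z: "z = M *\<^sub>v (E i *\<^sub>v v)"
    unfolding map_image_def mat_image_def by auto
  let ?nbrs = "filter (\<lambda>k. i \<le> k + 1 \<and> k \<le> i + 1) [0..<Suc d]"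
  have "set ?nbrs \<subseteq> {..d}" by auto
  moreover have "E j *\<^sub>v z = 0\<^sub>v n" if "j \<le> d" "j \<notin> set ?nbrs" for j
    using that far[of j v] v z by (auto simp del: upt_Suc)
  ultimately show "z \<in> nbr_sum n d X lam i"
    unfolding nbr_sum_def using mem_subspace_sum_images_iff M v z by (simp del: upt_Suc)
qed

lemma idem_mult_idem_eq_zero_if_commutation:
  assumes M: "M \<in> carrier_mat n n" and rel: "a \<cdot>\<^sub>m (X * M) + b \<cdot>\<^sub>m (M * X) = c \<cdot>\<^sub>m 1\<^sub>m n"
    and i: "i \<le> d" and j: "j \<le> d" "j \<noteq> i" and coeff: "a * lam j + b * lam i \<noteq> 0"
    and v: "v \<in> carrier_vec n"
  shows "E j *\<^sub>v (M *\<^sub>v (E i *\<^sub>v v)) = 0\<^sub>v n"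
proof -
  let ?y = "E i *\<^sub>v v"
  let ?w = "E j *\<^sub>v (M *\<^sub>v ?y)"
  have y: "?y \<in> carrier_vec n" and w: "?w \<in> carrier_vec n" using v M by auto
  have "E j *\<^sub>v ((a \<cdot>\<^sub>m (X * M) + b \<cdot>\<^sub>m (M * X)) *\<^sub>v ?y)
      = a \<cdot>\<^sub>v (E j *\<^sub>v (X *\<^sub>v (M *\<^sub>v ?y))) + b \<cdot>\<^sub>v (E j *\<^sub>v (M *\<^sub>v (X *\<^sub>v ?y)))"
    using M carrier_X y
    by (simp add: mult_mat_vec_lincomb_products mult_add_distrib_mat_vec[of _ n n] mult_mat_vec[of _ n n])
  also have "\<dots> = (a * lam j + b * lam i) \<cdot>\<^sub>v ?w"
    using M y v i j by (simp add: idem_mult mult_idem mult_mat_vec[of _ n n] smult_smult_assoc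
        add_smult_distrib_vec mult.commute)
  finally have "(a * lam j + b * lam i) \<cdot>\<^sub>v ?w = c \<cdot>\<^sub>v (E j *\<^sub>v ?y)"
    using y by (simp add: rel smult_mat_mult_vec[of _ n n] mult_mat_vec[of _ n n])
  also have "E j *\<^sub>v ?y = 0\<^sub>v n" using v i j by (simp add: idem_idem)
  finally show ?thesis using coeff w by (simp add: smult_vec_eq_zero_iff)
qed

lemma conjugate:
  assumes P: "P \<in> carrier_mat n n" and Q: "Q \<in> carrier_mat n n"
    and PQ: "P * Q = 1\<^sub>m n" and QP: "Q * P = 1\<^sub>m n"
  shows "eigen_decomp n d (P * X * Q) lam"
proof
  show "P * X * Q \<in> carrier_mat n n" using P Q carrier_X by simp
  show "inj_on lam {0..d}" by (rule inj_lam)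
  fix v :: "'a vec" assume v: "v \<in> carrier_vec n"
  obtain f where f: "\<forall>k\<le>d. f k \<in> carrier_vec n \<and> X *\<^sub>v f k = lam k \<cdot>\<^sub>v f k"
    and Qv: "Q *\<^sub>v v = finsum_vec TYPE('a) n f {0..d}"
    using decomp[of "Q *\<^sub>v v"] Q v by auto
  have eig: "P *\<^sub>v f k \<in> carrier_vec n \<and> (P * X * Q) *\<^sub>v (P *\<^sub>v f k) = lam k \<cdot>\<^sub>v (P *\<^sub>v f k)"
    if "k \<le> d" for k
  proof -
    have "(P * X * Q) *\<^sub>v (P *\<^sub>v f k) = P *\<^sub>v (X *\<^sub>v (Q *\<^sub>v (P *\<^sub>v f k)))"
      using P f that by (intro assoc_mult_mat_mat_vec[OF P carrier_X Q]) auto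
    also have "Q *\<^sub>v (P *\<^sub>v f k) = f k"
      using f that by (intro mult_mat_vec_left_inverse[OF P Q QP]) auto
    finally have "(P * X * Q) *\<^sub>v (P *\<^sub>v f k) = P *\<^sub>v (X *\<^sub>v f k)" .
    then show ?thesis using P f that by (simp add: mult_mat_vec)
  qed
  have sum: "v = finsum_vec TYPE('a) n (\<lambda>k. P *\<^sub>v f k) {0..d}"
  proof -
    have "v = P *\<^sub>v (Q *\<^sub>v v)" using mult_mat_vec_left_inverse[OF Q P PQ v] by simp
    also have "\<dots> = finsum_vec TYPE('a) n (\<lambda>k. P *\<^sub>v f k) {0..d}"
      unfolding Qv using P f by (intro mult_mat_finsum_vec) auto
    finally show ?thesis .
  qed
  show "\<exists>f. (\<forall>k\<le>d. f k \<in> carrier_vec n \<and> (P * X * Q) *\<^sub>v f k = lam k \<cdot>\<^sub>v f k)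
      \<and> v = finsum_vec TYPE('a) n f {0..d}"
    by (intro exI[of _ "\<lambda>k. P *\<^sub>v f k"] conjI allI impI eig sum)
qed

lemma idem_conjugate:
  assumes P: "P \<in> carrier_mat n n" and Q: "Q \<in> carrier_mat n n"
    and PQ: "P * Q = 1\<^sub>m n" and QP: "Q * P = 1\<^sub>m n" and v: "v \<in> carrier_vec n" and j: "j \<le> d"
  shows "prim_idem n d (P * X * Q) lam j *\<^sub>v v = P *\<^sub>v (E j *\<^sub>v (Q *\<^sub>v v))"
proof -
  interpret conj: eigen_decomp n d "P * X * Q" lam by (rule conjugate[OF P Q PQ QP])
  let ?f = "\<lambda>k. P *\<^sub>v (E k *\<^sub>v (Q *\<^sub>v v))"
  have eig: "\<forall>k\<le>d. ?f k \<in> carrier_vec n \<and> (P * X * Q) *\<^sub>v ?f k = lam k \<cdot>\<^sub>v ?f k"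
  proof (intro allI impI conjI)
    fix k assume k: "k \<le> d"
    show "?f k \<in> carrier_vec n" using P Q v by simp
    have "(P * X * Q) *\<^sub>v ?f k = P *\<^sub>v (X *\<^sub>v (Q *\<^sub>v ?f k))"
      using P Q v by (intro assoc_mult_mat_mat_vec[OF P carrier_X Q]) auto
    also have "Q *\<^sub>v ?f k = E k *\<^sub>v (Q *\<^sub>v v)"
      using Q v by (intro mult_mat_vec_left_inverse[OF P Q QP]) auto
    finally show "(P * X * Q) *\<^sub>v ?f k = lam k \<cdot>\<^sub>v ?f k"
      using P Q v k by (simp add: mult_idem mult_mat_vec)
  qed
  have "finsum_vec TYPE('a) n ?f {0..d} = P *\<^sub>v finsum_vec TYPE('a) n (\<lambda>k. E k *\<^sub>v (Q *\<^sub>v v)) {0..d}"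
    using P Q v by (intro mult_mat_finsum_vec[symmetric]) auto
  also have "\<dots> = v" using P Q v by (simp add: finsum_idem mult_mat_vec_left_inverse[OF Q P PQ])
  finally have sum: "finsum_vec TYPE('a) n ?f {0..d} = v" .
  show ?thesis using conj.idem_finsum_eigenvectors[OF eig j] unfolding sum .
qed

definition spectral_mat :: "(nat \<Rightarrow> 'a) \<Rightarrow> 'a mat" where
  "spectral_mat c = mat n n (\<lambda>(i, l). \<Sum>k\<in>{0..d}. c k * E k $$ (i, l))"

lemma spectral_mat_carrier [simp]: "spectral_mat c \<in> carrier_mat n n"
  and spectral_mat_dim [simp]: "dim_row (spectral_mat c) = n" "dim_col (spectral_mat c) = n"
  unfolding spectral_mat_def by simp_all

lemma spectral_mat_mult_vec_carrier [simp]: "spectral_mat c *\<^sub>v v \<in> carrier_vec n"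
  by (rule carrier_vecI) simp

lemma spectral_mat_mult_eigenvector:
  assumes u: "u \<in> carrier_vec n" "X *\<^sub>v u = lam m \<cdot>\<^sub>v u" and m: "m \<le> d"
  shows "spectral_mat c *\<^sub>v u = c m \<cdot>\<^sub>v u"
proof (rule eq_vecI)
  fix i assume "i < dim_vec (c m \<cdot>\<^sub>v u)"
  then have i: "i < n" using u by simp
  have "(spectral_mat c *\<^sub>v u) $ i = (\<Sum>l\<in>{0..<n}. (\<Sum>k\<in>{0..d}. c k * E k $$ (i, l)) * u $ l)"
    using u i by (simp add: spectral_mat_def scalar_prod_def)
  also have "\<dots> = (\<Sum>k\<in>{0..d}. c k * (\<Sum>l\<in>{0..<n}. E k $$ (i, l) * u $ l))"
    by (simp add: sum_distrib_left sum_distrib_right mult.assoc) (rule sum.swap)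
  also have "\<dots> = (\<Sum>k\<in>{0..d}. c k * (E k *\<^sub>v u) $ i)"
    using u i by (simp add: scalar_prod_def)
  also have "\<dots> = (\<Sum>k\<in>{0..d}. if k = m then c m * u $ i else 0)"
    using u m i by (intro sum.cong) (auto simp: idem_mult_eigenvector)
  also have "\<dots> = c m * u $ i" using m by simp
  finally show "(spectral_mat c *\<^sub>v u) $ i = (c m \<cdot>\<^sub>v u) $ i" using u i by simp
qed (use u in simp)

end

lemma diagonal_mat_mult_vec:
  assumes "diagonal_mat D" "D \<in> carrier_mat n n" "w \<in> carrier_vec n"
  shows "D *\<^sub>v w = vec n (\<lambda>i. D $$ (i, i) * w $ i)"
proof (rule eq_vecI)
  fix i assume "i < dim_vec (vec n (\<lambda>i. D $$ (i, i) * w $ i))"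
  then have i: "i < n" by simp
  have "(D *\<^sub>v w) $ i = (\<Sum>l\<in>{0..<n}. D $$ (i, l) * w $ l)"
    using assms i by (simp add: scalar_prod_def)
  also have "\<dots> = (\<Sum>l\<in>{0..<n}. if l = i then D $$ (i, i) * w $ i else 0)"
    using assms i by (intro sum.cong) (auto simp: diagonal_mat_def)
  finally show "(D *\<^sub>v w) $ i = vec n (\<lambda>i. D $$ (i, i) * w $ i) $ i" using i by simp
qed (use assms in simp)

lemma eigen_decomp_diagonal:
  fixes D :: "'a::field mat"
  assumes D: "D \<in> carrier_mat n n" "diagonal_mat D" and entries: "\<forall>m<n. D $$ (m, m) \<in> lam ` {0..d}"
    and inj: "inj_on lam {0..d}"
  shows "eigen_decomp n d D lam"
proof
  fix v :: "'a vec" assume v: "v \<in> carrier_vec n"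
  define g where "g k = vec n (\<lambda>m. if D $$ (m, m) = lam k then v $ m else 0)" for k
  have "D *\<^sub>v g k = lam k \<cdot>\<^sub>v g k" for k
    using D by (simp add: diagonal_mat_mult_vec g_def vec_eq_iff)
  moreover have "v = finsum_vec TYPE('a) n g {0..d}"
  proof (rule eq_vecI)
    fix m assume "m < dim_vec (finsum_vec TYPE('a) n g {0..d})"
    then have m: "m < n" by (simp add: finsum_vec_eq_vec g_def)
    then obtain k where k: "k \<in> {0..d}" "D $$ (m, m) = lam k" using entries by auto
    have "(\<Sum>j\<in>{0..d}. g j $ m) = (\<Sum>j\<in>{0..d}. if j = k then v $ m else 0)"
      using m k inj by (intro sum.cong) (auto simp: g_def dest: inj_onD)
    then show "v $ m = finsum_vec TYPE('a) n g {0..d} $ m"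
      using m k by (simp add: finsum_vec_eq_vec g_def)
  qed (use v in \<open>simp add: finsum_vec_eq_vec g_def\<close>)
  ultimately show "\<exists>f. (\<forall>k\<le>d. f k \<in> carrier_vec n \<and> D *\<^sub>v f k = lam k \<cdot>\<^sub>v f k)
      \<and> v = finsum_vec TYPE('a) n f {0..d}"
    by (intro exI[of _ g]) (simp add: g_def)
qed (use assms in auto)

lemma eigen_decomp_if_diagonalizable:
  fixes X :: "'a::field mat"
  assumes X: "X \<in> carrier_mat n n" and diag: "diagonalizable_mat X"
    and eigenvalues: "{k. eigenvalue X k} \<subseteq> lam ` {0..d}" and inj: "inj_on lam {0..d}"
  shows "eigen_decomp n d X lam"
proof -
  obtain D P Q where D: "diagonal_mat D" and wit: "similar_mat_wit X D P Q"
    using diag unfolding diagonalizable_mat_def similar_mat_def by blast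
  then have carrier: "D \<in> carrier_mat n n" "P \<in> carrier_mat n n" "Q \<in> carrier_mat n n"
    and PQ: "P * Q = 1\<^sub>m n" and QP: "Q * P = 1\<^sub>m n" and X_eq: "X = P * D * Q"
    using X unfolding similar_mat_wit_def Let_def by auto
  have "D $$ (m, m) \<in> lam ` {0..d}" if m: "m < n" for m
  proof -
    have "upper_triangular D" using D carrier(1) unfolding diagonal_mat_def upper_triangular_def by auto
    moreover have "char_poly X = char_poly D"
      using wit by (intro char_poly_similar) (auto simp: similar_mat_def)
    ultimately have "char_poly X = (\<Prod>a\<leftarrow>diag_mat D. [:- a, 1:])"
      using char_poly_upper_triangular[OF carrier(1)] by simp
    moreover have "D $$ (m, m) \<in> set (diag_mat D)" using m carrier by (simp add: diag_mat_def)
    ultimately have "eigenvalue X (D $$ (m, m))"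
      by (simp add: eigenvalue_root_char_poly[OF X] linear_poly_root)
    then show ?thesis using eigenvalues by auto
  qed
  then interpret diagonal: eigen_decomp n d D lam
    using carrier D inj by (intro eigen_decomp_diagonal) auto
  show ?thesis unfolding X_eq by (rule diagonal.conjugate[OF carrier(2,3) PQ QP])
qed

subsection \<open>The split decomposition of a tridiagonal system\<close>

locale tridiagonal_sys =
  fixes n d :: nat and A As :: "'a::field mat" and th ths :: "nat \<Rightarrow> 'a"
  assumes tridiagonal: "tridiagonal_system n d A th As ths"
begin

lemma carrier_A [simp]: "A \<in> carrier_mat n n" and carrier_As [simp]: "As \<in> carrier_mat n n"
  using tridiagonal unfolding tridiagonal_system_def by auto

lemma dim_A_As [simp]: "dim_row A = n" "dim_col A = n" "dim_row As = n" "dim_col As = n"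
  using carrier_matD[OF carrier_A] carrier_matD[OF carrier_As] by auto

lemma A_As_mult_vec_carrier [simp]:
  "v \<in> carrier_vec n \<Longrightarrow> A *\<^sub>v v \<in> carrier_vec n" "v \<in> carrier_vec n \<Longrightarrow> As *\<^sub>v v \<in> carrier_vec n"
  by (simp_all add: mult_mat_vec_carrier[OF carrier_A] mult_mat_vec_carrier[OF carrier_As])

sublocale EA: eigen_decomp n d A th
  by (rule eigen_decomp_if_diagonalizable) (use tridiagonal in \<open>auto simp: tridiagonal_system_def\<close>)

sublocale ES: eigen_decomp n d As ths
  by (rule eigen_decomp_if_diagonalizable) (use tridiagonal in \<open>auto simp: tridiagonal_system_def\<close>)

lemma ES_A_ES_far:
  assumes "i \<le> d" "j \<le> d" "j + 1 < i \<or> i + 1 < j" "v \<in> carrier_vec n"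
  shows "ES.E j *\<^sub>v (A *\<^sub>v (ES.E i *\<^sub>v v)) = 0\<^sub>v n"
proof -
  have "ES.E j *\<^sub>v (A *\<^sub>v (ES.E i *\<^sub>v v)) = (ES.E j * A * ES.E i) *\<^sub>v v"
    by (rule assoc_mult_mat_mat_vec[symmetric]) (use assms(4) in auto)
  also have "ES.E j * A * ES.E i = 0\<^sub>m n n" using tridiagonal assms unfolding tridiagonal_system_def by auto
  finally show ?thesis using assms(4) by simp
qed

lemma EA_As_EA_far:
  assumes "i \<le> d" "j \<le> d" "j + 1 < i \<or> i + 1 < j" "v \<in> carrier_vec n"
  shows "EA.E j *\<^sub>v (As *\<^sub>v (EA.E i *\<^sub>v v)) = 0\<^sub>v n"
proof -
  have "EA.E j *\<^sub>v (As *\<^sub>v (EA.E i *\<^sub>v v)) = (EA.E j * As * EA.E i) *\<^sub>v v"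
    by (rule assoc_mult_mat_mat_vec[symmetric]) (use assms(4) in auto)
  also have "EA.E j * As * EA.E i = 0\<^sub>m n n" using tridiagonal assms unfolding tridiagonal_system_def by auto
  finally show ?thesis using assms(4) by simp
qed

definition U :: "nat \<Rightarrow> 'a vec set" where
  "U k = {u \<in> carrier_vec n. (\<forall>j\<le>d. k < j \<longrightarrow> ES.E j *\<^sub>v u = 0\<^sub>v n) \<and> (\<forall>j\<le>d. j < k \<longrightarrow> EA.E j *\<^sub>v u = 0\<^sub>v n)}"

lemma split_comp_eq_U:
  assumes k: "k \<le> d"
  shows "split_comp n d A th As ths k = U k"
proof -
  have "set [0..<Suc k] \<subseteq> {..d}" "set [k..<Suc d] \<subseteq> {..d}" using k by auto
  then show ?thesis
    unfolding split_comp_def U_def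
    using ES.mem_subspace_sum_images_iff EA.mem_subspace_sum_images_iff k by (auto simp del: upt_Suc)
qed

lemma U_carrier: "u \<in> U k \<Longrightarrow> u \<in> carrier_vec n"
  unfolding U_def by simp

lemma is_subspace_U: "is_subspace n (U k)"
  unfolding is_subspace_def U_def
  by (auto simp: mult_add_distrib_mat_vec[of _ n n] mult_mat_vec[of _ n n])

lemma U_smult: "u \<in> U k \<Longrightarrow> c \<cdot>\<^sub>v u \<in> U k"
  using is_subspace_U unfolding is_subspace_def by blast

lemma U_Suc_d: "U (Suc d) = {0\<^sub>v n}"
  using EA.eq_zero_if_idem_zero is_subspace_U unfolding U_def is_subspace_def by auto

lemma A_raises_U:
  assumes u: "u \<in> U k" and k: "k \<le> d"
  shows "A *\<^sub>v u - th k \<cdot>\<^sub>v u \<in> U (Suc k)"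
proof -
  have uc: "u \<in> carrier_vec n" and ES_u: "\<And>j. j \<le> d \<Longrightarrow> k < j \<Longrightarrow> ES.E j *\<^sub>v u = 0\<^sub>v n"
    and EA_u: "\<And>j. j \<le> d \<Longrightarrow> j < k \<Longrightarrow> EA.E j *\<^sub>v u = 0\<^sub>v n"
    using u unfolding U_def by auto
  have "ES.E j *\<^sub>v (A *\<^sub>v u) = 0\<^sub>v n" if j: "j \<le> d" "Suc k < j" for j
  proof (rule ES.idem_mult_eq_zero_if_sandwiches_zero[OF carrier_A uc])
    fix m assume m: "m \<le> d"
    show "ES.E j *\<^sub>v (A *\<^sub>v (ES.E m *\<^sub>v u)) = 0\<^sub>v n"
      using ES_A_ES_far[OF m j(1) _ uc] ES_u[OF m] j by (cases "m \<le> k") auto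
  qed
  then have "ES.E j *\<^sub>v (A *\<^sub>v u - th k \<cdot>\<^sub>v u) = 0\<^sub>v n" if "j \<le> d" "Suc k < j" for j
    using that uc ES_u by (simp add: mult_minus_distrib_mat_vec[of _ n n] mult_mat_vec[of _ n n])
  moreover have "EA.E j *\<^sub>v (A *\<^sub>v u - th k \<cdot>\<^sub>v u) = 0\<^sub>v n" if "j \<le> d" "j < Suc k" for j
    using that uc EA_u[of j]
    by (cases "j = k") (auto simp: mult_minus_distrib_mat_vec[of _ n n] mult_mat_vec[of _ n n] EA.idem_mult)
  ultimately show ?thesis using uc unfolding U_def by auto
qed

lemma As_lowers_U:
  assumes u: "u \<in> U (Suc k)" and k: "Suc k \<le> d"
  shows "As *\<^sub>v u - ths (Suc k) \<cdot>\<^sub>v u \<in> U k"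
proof -
  have uc: "u \<in> carrier_vec n" and ES_u: "\<And>j. j \<le> d \<Longrightarrow> Suc k < j \<Longrightarrow> ES.E j *\<^sub>v u = 0\<^sub>v n"
    and EA_u: "\<And>j. j \<le> d \<Longrightarrow> j < Suc k \<Longrightarrow> EA.E j *\<^sub>v u = 0\<^sub>v n"
    using u unfolding U_def by auto
  have "EA.E j *\<^sub>v (As *\<^sub>v u) = 0\<^sub>v n" if j: "j \<le> d" "j < k" for j
  proof (rule EA.idem_mult_eq_zero_if_sandwiches_zero[OF carrier_As uc])
    fix m assume m: "m \<le> d"
    show "EA.E j *\<^sub>v (As *\<^sub>v (EA.E m *\<^sub>v u)) = 0\<^sub>v n"
      using EA_As_EA_far[OF m j(1) _ uc] EA_u[OF m] j by (cases "Suc k \<le> m") auto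
  qed
  then have "EA.E j *\<^sub>v (As *\<^sub>v u - ths (Suc k) \<cdot>\<^sub>v u) = 0\<^sub>v n" if "j \<le> d" "j < k" for j
    using that uc EA_u by (simp add: mult_minus_distrib_mat_vec[of _ n n] mult_mat_vec[of _ n n])
  moreover have "ES.E j *\<^sub>v (As *\<^sub>v u - ths (Suc k) \<cdot>\<^sub>v u) = 0\<^sub>v n" if "j \<le> d" "k < j" for j
    using that uc ES_u[of j]
    by (cases "j = Suc k") (auto simp: mult_minus_distrib_mat_vec[of _ n n] mult_mat_vec[of _ n n] ES.idem_mult)
  ultimately show ?thesis using uc unfolding U_def by auto
qed

lemma As_on_U0:
  assumes u: "u \<in> U 0"
  shows "As *\<^sub>v u = ths 0 \<cdot>\<^sub>v u"
proof -
  have uc: "u \<in> carrier_vec n" and ES_u: "\<And>j. j \<le> d \<Longrightarrow> 0 < j \<Longrightarrow> ES.E j *\<^sub>v u = 0\<^sub>v n"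
    using u unfolding U_def by auto
  have "u = finsum_vec TYPE('a) n (\<lambda>j. ES.E j *\<^sub>v u) {0..d}" using ES.finsum_idem[OF uc] by simp
  also have "\<dots> = finsum_vec TYPE('a) n (\<lambda>j. if j = 0 then ES.E 0 *\<^sub>v u else 0\<^sub>v n) {0..d}"
    using uc ES_u by (intro finsum_vec_cong) auto
  also have "\<dots> = ES.E 0 *\<^sub>v u" using uc by (intro finsum_vec_delta) auto
  finally have "ES.E 0 *\<^sub>v u = u" by simp
  then show ?thesis using ES.mult_idem[OF uc, of 0] by simp
qed

lemma is_subspace_family_sum_U: "is_subspace n (family_sum n U {0..d})"
  by (simp add: is_subspace_family_sum is_subspace_U)

lemma U_subset_family_sum:
  assumes "k \<le> Suc d"
  shows "U k \<subseteq> family_sum n U {0..d}"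
proof (cases "k = Suc d")
  case True
  then show ?thesis using is_subspace_family_sum_U by (simp add: U_Suc_d is_subspace_def)
next
  case False
  then show ?thesis using assms by (intro subset_family_sum) (auto simp: is_subspace_U)
qed

lemma family_sum_U: "family_sum n U {0..d} = carrier_vec n"
proof -
  let ?W = "family_sum n U {0..d}"
  have W_add: "u + w \<in> ?W" if "u \<in> ?W" "w \<in> ?W" for u w
    using is_subspace_family_sum_U that unfolding is_subspace_def by blast
  have "A *\<^sub>v u \<in> ?W" if k: "k \<le> d" and u: "u \<in> U k" for k u
  proof -
    have "th k \<cdot>\<^sub>v u \<in> ?W" using U_smult[OF u] U_subset_family_sum[of k] k by auto
    moreover have "A *\<^sub>v u - th k \<cdot>\<^sub>v u \<in> ?W"
      using A_raises_U[OF u k] U_subset_family_sum[of "Suc k"] k by auto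
    moreover have "th k \<cdot>\<^sub>v u + (A *\<^sub>v u - th k \<cdot>\<^sub>v u) = A *\<^sub>v u"
      using U_carrier[OF u] by (auto intro!: eq_vecI)
    ultimately show ?thesis using W_add by metis
  qed
  then have "invariant_sub A ?W" by (intro invariant_family_sum) (auto simp: is_subspace_U)
  moreover have "As *\<^sub>v u \<in> ?W" if k: "k \<le> d" and u: "u \<in> U k" for k u
  proof (cases k)
    case 0
    then show ?thesis using As_on_U0 U_smult u U_subset_family_sum[of 0] by auto
  next
    case (Suc k')
    have "ths k \<cdot>\<^sub>v u \<in> ?W" using U_smult[OF u] U_subset_family_sum[of k] k by auto
    moreover have "As *\<^sub>v u - ths k \<cdot>\<^sub>v u \<in> ?W"
      using As_lowers_U[of u k'] u k Suc U_subset_family_sum[of k'] by auto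
    moreover have "ths k \<cdot>\<^sub>v u + (As *\<^sub>v u - ths k \<cdot>\<^sub>v u) = As *\<^sub>v u"
      using U_carrier[OF u] by (auto intro!: eq_vecI)
    ultimately show ?thesis using W_add by metis
  qed
  then have "invariant_sub As ?W" by (intro invariant_family_sum) (auto simp: is_subspace_U)
  moreover have "?W \<noteq> {0\<^sub>v n}"
  proof -
    have "eigenvalue As (ths 0)" using tridiagonal unfolding tridiagonal_system_def by auto
    then obtain x where x: "x \<in> carrier_vec n" "x \<noteq> 0\<^sub>v n" "As *\<^sub>v x = ths 0 \<cdot>\<^sub>v x"
      unfolding eigenvalue_def eigenvector_def by auto
    then have "x \<in> U 0" unfolding U_def by (auto simp: ES.idem_mult_eigenvector)
    then show ?thesis using x U_subset_family_sum[of 0] by auto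
  qed
  ultimately show ?thesis using tridiagonal is_subspace_family_sum_U unfolding tridiagonal_system_def by blast
qed

lemma U_decomp:
  assumes "v \<in> carrier_vec n"
  obtains g where "\<forall>k\<le>d. g k \<in> U k" "v = finsum_vec TYPE('a) n g {0..d}"
proof -
  have "v \<in> family_sum n U {0..d}" using assms family_sum_U by simp
  then obtain g where "\<forall>k\<in>{0..d}. g k \<in> U k" "v = finsum_vec TYPE('a) n g {0..d}"
    unfolding family_sum_def by blast
  then show ?thesis using that[of g] by auto
qed

lemma eq_if_eq_on_U:
  assumes M: "M \<in> carrier_mat n n" and N: "N \<in> carrier_mat n n"
    and eq: "\<And>k u. k \<le> d \<Longrightarrow> u \<in> U k \<Longrightarrow> M *\<^sub>v u = N *\<^sub>v u"
  shows "M = N"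
proof (rule eq_mat_on_vecI[OF M N])
  fix v :: "'a vec" assume v: "v \<in> carrier_vec n"
  then obtain g where g: "\<forall>k\<le>d. g k \<in> U k" and v_eq: "v = finsum_vec TYPE('a) n g {0..d}"
    by (rule U_decomp)
  have gc: "\<And>k. k \<in> {0..d} \<Longrightarrow> g k \<in> carrier_vec n" using g U_carrier by auto
  have "M *\<^sub>v v = finsum_vec TYPE('a) n (\<lambda>k. M *\<^sub>v g k) {0..d}"
    unfolding v_eq using M gc by (intro mult_mat_finsum_vec) auto
  also have "\<dots> = finsum_vec TYPE('a) n (\<lambda>k. N *\<^sub>v g k) {0..d}"
    using g gc eq by (intro finsum_vec_cong) (auto intro: mult_mat_vec_carrier[OF N])
  also have "\<dots> = N *\<^sub>v v"
    unfolding v_eq using N gc by (intro mult_mat_finsum_vec[symmetric]) auto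
  finally show "M *\<^sub>v v = N *\<^sub>v v" .
qed

end

lemma power_int_eq_iff:
  fixes q :: "'a::field"
  assumes q: "q \<noteq> 0" and not_root: "\<forall>m::nat. m > 0 \<longrightarrow> q ^ m \<noteq> 1"
  shows "q powi a = q powi b \<longleftrightarrow> a = b"
proof
  assume eq: "q powi a = q powi b"
  have "q powi c \<noteq> 1" if "c > 0" for c :: int
    using not_root that by (simp add: power_int_def)
  moreover have "q powi (a - b) = 1" "q powi (b - a) = 1"
    using eq q by (simp_all add: power_int_diff)
  ultimately show "a = b" by (cases a b rule: linorder_cases) auto
qed simp

subsection \<open>The matrix K and the q-commutation relations\<close>

locale q_tridiagonal_sys = tridiagonal_sys +
  fixes q :: 'a and K :: "'a mat"
  assumes th_eq: "th i = q powi (2 * int i - int d)" and ths_eq: "ths i = q powi (int d - 2 * int i)"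
    and q_nonzero: "q \<noteq> 0" and q_not_root_of_unity: "\<forall>m::nat. m > 0 \<longrightarrow> q ^ m \<noteq> 1"
    and carrier_K: "K \<in> carrier_mat n n"
    and K_on_split: "\<forall>i\<le>d. \<forall>u \<in> split_comp n d A th As ths i. K *\<^sub>v u = ths i \<cdot>\<^sub>v u"
begin

lemma carrier_K_simps [simp]: "K \<in> carrier_mat n n" "dim_row K = n" "dim_col K = n"
  "v \<in> carrier_vec n \<Longrightarrow> K *\<^sub>v v \<in> carrier_vec n"
  using carrier_K by auto

lemma K_on_U: "u \<in> U k \<Longrightarrow> k \<le> Suc d \<Longrightarrow> K *\<^sub>v u = ths k \<cdot>\<^sub>v u"
  using K_on_split split_comp_eq_U U_Suc_d by (cases "k = Suc d") auto

sublocale EK: eigen_decomp n d K ths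
proof
  show "K \<in> carrier_mat n n" "inj_on ths {0..d}" by (simp_all add: ES.inj_lam)
  fix v :: "'a vec" assume "v \<in> carrier_vec n"
  then obtain g where "\<forall>k\<le>d. g k \<in> U k" "v = finsum_vec TYPE('a) n g {0..d}" by (rule U_decomp)
  then show "\<exists>f. (\<forall>k\<le>d. f k \<in> carrier_vec n \<and> K *\<^sub>v f k = ths k \<cdot>\<^sub>v f k) \<and> v = finsum_vec TYPE('a) n f {0..d}"
    using K_on_U U_carrier by (intro exI[of _ g]) auto
qed

lemma spectral_on_U: "u \<in> U k \<Longrightarrow> k \<le> Suc d \<Longrightarrow> EK.spectral_mat c *\<^sub>v u = c k \<cdot>\<^sub>v u"
  using EK.spectral_mat_mult_eigenvector K_on_U U_carrier U_Suc_d by (cases "k = Suc d") auto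

text \<open>\<open>Kinv\<close> acts on \<open>U k\<close> as \<open>th k = (ths k)\<^sup>-\<^sup>1\<close>, so it is \<open>K\<^sup>-\<^sup>1\<close>.\<close>

abbreviation Kinv :: "'a mat" where
  "Kinv \<equiv> EK.spectral_mat th"

lemma th_mult_ths: "th k * ths k = 1"
  using q_nonzero by (simp add: th_eq ths_eq flip: power_int_add)

lemma q2_mult_powi: "q\<^sup>2 * q powi a = q powi (a + 2)"
  using q_nonzero by (simp add: power_int_add)

lemma q2_mult_ths_Suc: "q\<^sup>2 * ths (Suc k) = ths k"
  by (simp add: ths_eq q2_mult_powi algebra_simps)

lemma q2_mult_th: "q\<^sup>2 * th k = th (Suc k)"
  by (simp add: th_eq q2_mult_powi algebra_simps)

lemma q2_mult_th_neq: "Suc i \<noteq> j \<Longrightarrow> q\<^sup>2 * th i \<noteq> th j"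
  using power_int_eq_iff[OF q_nonzero q_not_root_of_unity] by (simp add: th_eq q2_mult_powi)

lemma q2_mult_ths_neq: "Suc j \<noteq> i \<Longrightarrow> q\<^sup>2 * ths i \<noteq> ths j"
  using power_int_eq_iff[OF q_nonzero q_not_root_of_unity] by (simp add: ths_eq q2_mult_powi)

lemma K_A_commutation: "q\<^sup>2 \<cdot>\<^sub>m (K * A) + (- 1) \<cdot>\<^sub>m (A * K) = (q\<^sup>2 - 1) \<cdot>\<^sub>m 1\<^sub>m n"
proof (rule eq_if_eq_on_U)
  fix k u assume k: "k \<le> d" and u: "u \<in> U k"
  define r where "r = A *\<^sub>v u - th k \<cdot>\<^sub>v u"
  have uc: "u \<in> carrier_vec n" and rc: "r \<in> carrier_vec n" using U_carrier[OF u] by (auto simp: r_def)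
  have Au: "A *\<^sub>v u = th k \<cdot>\<^sub>v u + r" using uc by (auto simp: r_def intro!: eq_vecI)
  have Ku: "K *\<^sub>v u = ths k \<cdot>\<^sub>v u" and Kr: "K *\<^sub>v r = ths (Suc k) \<cdot>\<^sub>v r"
    using K_on_U u A_raises_U[OF u k] k by (auto simp: r_def)
  have "(q\<^sup>2 \<cdot>\<^sub>m (K * A) + (- 1) \<cdot>\<^sub>m (A * K)) *\<^sub>v u = q\<^sup>2 \<cdot>\<^sub>v (K *\<^sub>v (A *\<^sub>v u)) + (- 1) \<cdot>\<^sub>v (A *\<^sub>v (K *\<^sub>v u))"
    using uc by (intro mult_mat_vec_lincomb_products) simp_all
  also have "K *\<^sub>v (A *\<^sub>v u) = th k \<cdot>\<^sub>v (ths k \<cdot>\<^sub>v u) + ths (Suc k) \<cdot>\<^sub>v r"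
    using uc rc by (simp add: Au Ku Kr mult_add_distrib_mat_vec[of _ n n] mult_mat_vec[of _ n n])
  also have "A *\<^sub>v (K *\<^sub>v u) = ths k \<cdot>\<^sub>v (th k \<cdot>\<^sub>v u + r)"
    using uc by (simp add: Au Ku mult_mat_vec[of _ n n])
  also have "q\<^sup>2 \<cdot>\<^sub>v (th k \<cdot>\<^sub>v (ths k \<cdot>\<^sub>v u) + ths (Suc k) \<cdot>\<^sub>v r) + (- 1) \<cdot>\<^sub>v (ths k \<cdot>\<^sub>v (th k \<cdot>\<^sub>v u + r))
      = ((q\<^sup>2 - 1) \<cdot>\<^sub>m 1\<^sub>m n) *\<^sub>v u"
  proof -
    have "q\<^sup>2 * (th k * (ths k * x) + ths (Suc k) * y) + (- 1) * (ths k * (th k * x + y))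
        = (q\<^sup>2 - 1) * (th k * ths k) * x + (q\<^sup>2 * ths (Suc k) - ths k) * y" for x y
      by (simp add: algebra_simps)
    then have "q\<^sup>2 * (th k * (ths k * x) + ths (Suc k) * y) + (- 1) * (ths k * (th k * x + y))
        = (q\<^sup>2 - 1) * x" for x y
      by (simp add: th_mult_ths q2_mult_ths_Suc)
    then show ?thesis using uc rc by (simp add: smult_mat_mult_vec[of _ n n] vec_eq_iff)
  qed
  finally show "(q\<^sup>2 \<cdot>\<^sub>m (K * A) + (- 1) \<cdot>\<^sub>m (A * K)) *\<^sub>v u = ((q\<^sup>2 - 1) \<cdot>\<^sub>m 1\<^sub>m n) *\<^sub>v u" .
qed (auto intro!: mult_carrier_mat)

lemma As_Kinv_commutation: "1 \<cdot>\<^sub>m (As * Kinv) + (- q\<^sup>2) \<cdot>\<^sub>m (Kinv * As) = (1 - q\<^sup>2) \<cdot>\<^sub>m 1\<^sub>m n"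
proof (rule eq_if_eq_on_U)
  fix k u assume k: "k \<le> d" and u: "u \<in> U k"
  have uc: "u \<in> carrier_vec n" using U_carrier[OF u] .
  obtain l c where lc: "l \<in> carrier_vec n" and Asu: "As *\<^sub>v u = ths k \<cdot>\<^sub>v u + l"
    and Kinv_l: "Kinv *\<^sub>v l = c \<cdot>\<^sub>v l" and c: "q\<^sup>2 * c = th k \<or> l = 0\<^sub>v n"
  proof (cases k)
    case 0
    then show thesis using that[of "0\<^sub>v n" 0] As_on_U0 u uc by simp
  next
    case (Suc k')
    define l where "l = As *\<^sub>v u - ths k \<cdot>\<^sub>v u"
    have "l \<in> U k'" using As_lowers_U u k Suc by (simp add: l_def)
    then have "Kinv *\<^sub>v l = th k' \<cdot>\<^sub>v l" using spectral_on_U k Suc by simp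
    moreover have "As *\<^sub>v u = ths k \<cdot>\<^sub>v u + l" using uc by (auto simp: l_def intro!: eq_vecI)
    ultimately show thesis
      using that[of l "th k'"] U_carrier[OF \<open>l \<in> U k'\<close>] Suc q2_mult_th[of k'] by simp
  qed
  have Kinv_u: "Kinv *\<^sub>v u = th k \<cdot>\<^sub>v u" using spectral_on_U u k by simp
  have "(1 \<cdot>\<^sub>m (As * Kinv) + (- q\<^sup>2) \<cdot>\<^sub>m (Kinv * As)) *\<^sub>v u
      = 1 \<cdot>\<^sub>v (As *\<^sub>v (Kinv *\<^sub>v u)) + (- q\<^sup>2) \<cdot>\<^sub>v (Kinv *\<^sub>v (As *\<^sub>v u))"
    using uc by (intro mult_mat_vec_lincomb_products) simp_all
  also have "Kinv *\<^sub>v (As *\<^sub>v u) = ths k \<cdot>\<^sub>v (th k \<cdot>\<^sub>v u) + c \<cdot>\<^sub>v l"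
    using uc lc by (simp add: Asu Kinv_u Kinv_l mult_add_distrib_mat_vec[of _ n n] mult_mat_vec[of _ n n])
  also have "As *\<^sub>v (Kinv *\<^sub>v u) = th k \<cdot>\<^sub>v (ths k \<cdot>\<^sub>v u + l)"
    using uc by (simp add: Asu Kinv_u mult_mat_vec[of _ n n])
  also have "1 \<cdot>\<^sub>v (th k \<cdot>\<^sub>v (ths k \<cdot>\<^sub>v u + l)) + (- q\<^sup>2) \<cdot>\<^sub>v (ths k \<cdot>\<^sub>v (th k \<cdot>\<^sub>v u) + c \<cdot>\<^sub>v l)
      = ((1 - q\<^sup>2) \<cdot>\<^sub>m 1\<^sub>m n) *\<^sub>v u"
  proof -
    have "1 * (th k * (ths k * x + y)) + (- q\<^sup>2) * (ths k * (th k * x) + c * y)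
        = (1 - q\<^sup>2) * (th k * ths k) * x + (th k - q\<^sup>2 * c) * y" for x y
      by (simp add: algebra_simps)
    then have "1 * (th k * (ths k * x + l $ i)) + (- q\<^sup>2) * (ths k * (th k * x) + c * l $ i)
        = (1 - q\<^sup>2) * x" if "i < n" for x i
      using c that by (auto simp: th_mult_ths)
    then show ?thesis using uc lc by (simp add: smult_mat_mult_vec[of _ n n] vec_eq_iff)
  qed
  finally show "(1 \<cdot>\<^sub>m (As * Kinv) + (- q\<^sup>2) \<cdot>\<^sub>m (Kinv * As)) *\<^sub>v u = ((1 - q\<^sup>2) \<cdot>\<^sub>m 1\<^sub>m n) *\<^sub>v u" .
qed (auto intro!: mult_carrier_mat)

lemma B_star_maps_A_idem:
  assumes i: "i \<le> d"
  shows "map_image (t \<cdot>\<^sub>m As + (1 - t) \<cdot>\<^sub>m K) (mat_image n (EA.E i)) \<subseteq> nbr_sum n d A th i"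
proof (rule EA.map_image_subset_nbr_sum[OF _ i])
  show "t \<cdot>\<^sub>m As + (1 - t) \<cdot>\<^sub>m K \<in> carrier_mat n n" by simp
  fix j and v :: "'a vec" assume j: "j \<le> d" "j + 1 < i \<or> i + 1 < j" and v: "v \<in> carrier_vec n"
  have "(- 1) \<cdot>\<^sub>m (A * K) + q\<^sup>2 \<cdot>\<^sub>m (K * A) = q\<^sup>2 \<cdot>\<^sub>m (K * A) + (- 1) \<cdot>\<^sub>m (A * K)"
    by (rule comm_add_mat) (auto intro!: mult_carrier_mat)
  then have "(- 1) \<cdot>\<^sub>m (A * K) + q\<^sup>2 \<cdot>\<^sub>m (K * A) = (q\<^sup>2 - 1) \<cdot>\<^sub>m 1\<^sub>m n"
    using K_A_commutation by simp
  moreover have "- 1 * th j + q\<^sup>2 * th i \<noteq> 0" using q2_mult_th_neq[of i j] j by auto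
  ultimately have K_part: "EA.E j *\<^sub>v (K *\<^sub>v (EA.E i *\<^sub>v v)) = 0\<^sub>v n"
    using i j v by (intro EA.idem_mult_idem_eq_zero_if_commutation) auto
  have As_part: "EA.E j *\<^sub>v (As *\<^sub>v (EA.E i *\<^sub>v v)) = 0\<^sub>v n"
    using EA_As_EA_far i j v by blast
  show "EA.E j *\<^sub>v ((t \<cdot>\<^sub>m As + (1 - t) \<cdot>\<^sub>m K) *\<^sub>v (EA.E i *\<^sub>v v)) = 0\<^sub>v n"
    using v K_part As_part
    by (simp add: add_mult_distrib_mat_vec[of _ n n] smult_mat_mult_vec[of _ n n]
        mult_add_distrib_mat_vec[of _ n n] mult_mat_vec[of _ n n])
qed

lemma A_maps_K_idem:
  assumes i: "i \<le> d"
  shows "map_image A (mat_image n (EK.E i)) \<subseteq> nbr_sum n d K ths i"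
proof (rule EK.map_image_subset_nbr_sum[OF carrier_A i])
  fix j and v :: "'a vec" assume j: "j \<le> d" "j + 1 < i \<or> i + 1 < j" and v: "v \<in> carrier_vec n"
  have "q\<^sup>2 * ths j + - 1 * ths i \<noteq> 0" using q2_mult_ths_neq[of i j] j by auto
  then show "EK.E j *\<^sub>v (A *\<^sub>v (EK.E i *\<^sub>v v)) = 0\<^sub>v n"
    using i j v K_A_commutation by (intro EK.idem_mult_idem_eq_zero_if_commutation) auto
qed

text \<open>\<open>scale t\<close> is the map \<open>D\<close>, acting on \<open>U k\<close> as \<open>t\<^sup>k\<close>.\<close>

abbreviation scale :: "'a \<Rightarrow> 'a mat" where
  "scale s \<equiv> EK.spectral_mat (\<lambda>k. s ^ k)"

lemma scale_mult_scale_inverse: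
  assumes t: "t \<noteq> 0"
  shows "scale t * scale (inverse t) = 1\<^sub>m n"
proof (rule eq_if_eq_on_U)
  fix k u assume k: "k \<le> d" and u: "u \<in> U k"
  have uc: "u \<in> carrier_vec n" using U_carrier[OF u] .
  have "(scale t * scale (inverse t)) *\<^sub>v u = scale t *\<^sub>v (scale (inverse t) *\<^sub>v u)"
    by (rule assoc_mult_mat_vec) (use uc in auto)
  also have "\<dots> = (t ^ k * inverse t ^ k) \<cdot>\<^sub>v u"
    using spectral_on_U[OF u] k uc by (simp add: mult_mat_vec[of _ n n] smult_smult_assoc mult.commute)
  also have "\<dots> = 1\<^sub>m n *\<^sub>v u" using t uc by (simp add: power_mult_distrib[symmetric])
  finally show "(scale t * scale (inverse t)) *\<^sub>v u = 1\<^sub>m n *\<^sub>v u" .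
qed (auto intro!: mult_carrier_mat)

lemma B_star_conjugate:
  assumes t: "t \<noteq> 0"
  shows "t \<cdot>\<^sub>m As + (1 - t) \<cdot>\<^sub>m K = scale (inverse t) * As * scale t"
proof (rule eq_if_eq_on_U)
  fix k u assume k: "k \<le> d" and u: "u \<in> U k"
  have uc: "u \<in> carrier_vec n" using U_carrier[OF u] .
  obtain l where lc: "l \<in> carrier_vec n" and Asu: "As *\<^sub>v u = ths k \<cdot>\<^sub>v u + l"
    and scale_l: "\<And>s. s \<noteq> 0 \<Longrightarrow> scale s *\<^sub>v l = (s ^ k / s) \<cdot>\<^sub>v l"
  proof (cases k)
    case 0
    then show thesis using that[of "0\<^sub>v n"] As_on_U0 u uc by simp
  next
    case (Suc k')
    define l where "l = As *\<^sub>v u - ths k \<cdot>\<^sub>v u"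
    have l: "l \<in> U k'" using As_lowers_U u k Suc by (simp add: l_def)
    have "As *\<^sub>v u = ths k \<cdot>\<^sub>v u + l" using uc by (auto simp: l_def intro!: eq_vecI)
    moreover have "scale s *\<^sub>v l = (s ^ k / s) \<cdot>\<^sub>v l" if "s \<noteq> 0" for s
      using spectral_on_U[OF l] k Suc that by simp
    ultimately show thesis using that[of l] U_carrier[OF l] by simp
  qed
  have "(scale (inverse t) * As * scale t) *\<^sub>v u = scale (inverse t) *\<^sub>v (As *\<^sub>v (scale t *\<^sub>v u))"
    using uc by (intro assoc_mult_mat_mat_vec) auto
  also have "scale t *\<^sub>v u = t ^ k \<cdot>\<^sub>v u" using spectral_on_U[OF u] k by simp
  also have "As *\<^sub>v (t ^ k \<cdot>\<^sub>v u) = t ^ k \<cdot>\<^sub>v (ths k \<cdot>\<^sub>v u + l)"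
    using uc by (simp add: Asu mult_mat_vec[of _ n n])
  also have "scale (inverse t) *\<^sub>v (t ^ k \<cdot>\<^sub>v (ths k \<cdot>\<^sub>v u + l))
      = t ^ k \<cdot>\<^sub>v (ths k \<cdot>\<^sub>v (inverse t ^ k \<cdot>\<^sub>v u) + (inverse t ^ k / inverse t) \<cdot>\<^sub>v l)"
    using uc lc t spectral_on_U[OF u] k scale_l[of "inverse t"]
    by (simp add: mult_mat_vec[of _ n n] mult_add_distrib_mat_vec[of _ n n])
  also have "\<dots> = ths k \<cdot>\<^sub>v u + t \<cdot>\<^sub>v l"
    using t uc lc by (simp add: vec_eq_iff power_mult_distrib[symmetric] field_simps)
  also have "\<dots> = (t \<cdot>\<^sub>m As + (1 - t) \<cdot>\<^sub>m K) *\<^sub>v u"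
    using uc lc K_on_U[OF u] k
    by (simp add: Asu add_mult_distrib_mat_vec[of _ n n] smult_mat_mult_vec[of _ n n] vec_eq_iff
        algebra_simps)
  finally show "(t \<cdot>\<^sub>m As + (1 - t) \<cdot>\<^sub>m K) *\<^sub>v u = (scale (inverse t) * As * scale t) *\<^sub>v u"
    by (rule sym)
qed (auto intro!: mult_carrier_mat)

lemma A_conjugate:
  assumes t: "t \<noteq> 0"
  shows "scale t * A * scale (inverse t) = (1 - t) \<cdot>\<^sub>m Kinv + t \<cdot>\<^sub>m A"
proof (rule eq_if_eq_on_U)
  fix k u assume k: "k \<le> d" and u: "u \<in> U k"
  define r where "r = A *\<^sub>v u - th k \<cdot>\<^sub>v u"
  have uc: "u \<in> carrier_vec n" using U_carrier[OF u] .
  have r: "r \<in> U (Suc k)" using A_raises_U[OF u k] by (simp add: r_def)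
  have rc: "r \<in> carrier_vec n" using U_carrier[OF r] .
  have Au: "A *\<^sub>v u = th k \<cdot>\<^sub>v u + r" using uc by (auto simp: r_def intro!: eq_vecI)
  have "(scale t * A * scale (inverse t)) *\<^sub>v u = scale t *\<^sub>v (A *\<^sub>v (scale (inverse t) *\<^sub>v u))"
    using uc by (intro assoc_mult_mat_mat_vec) auto
  also have "scale (inverse t) *\<^sub>v u = inverse t ^ k \<cdot>\<^sub>v u" using spectral_on_U[OF u] k by simp
  also have "A *\<^sub>v (inverse t ^ k \<cdot>\<^sub>v u) = inverse t ^ k \<cdot>\<^sub>v (th k \<cdot>\<^sub>v u + r)"
    using uc by (simp add: Au mult_mat_vec[of _ n n])
  also have "scale t *\<^sub>v (inverse t ^ k \<cdot>\<^sub>v (th k \<cdot>\<^sub>v u + r))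
      = inverse t ^ k \<cdot>\<^sub>v (th k \<cdot>\<^sub>v (t ^ k \<cdot>\<^sub>v u) + t ^ Suc k \<cdot>\<^sub>v r)"
    using uc rc spectral_on_U[OF u] spectral_on_U[OF r] k
    by (simp add: mult_mat_vec[of _ n n] mult_add_distrib_mat_vec[of _ n n])
  also have "\<dots> = (1 - t) \<cdot>\<^sub>v (th k \<cdot>\<^sub>v u) + t \<cdot>\<^sub>v (th k \<cdot>\<^sub>v u + r)"
    using t uc rc by (simp add: vec_eq_iff power_mult_distrib[symmetric] field_simps)
  also have "\<dots> = ((1 - t) \<cdot>\<^sub>m Kinv + t \<cdot>\<^sub>m A) *\<^sub>v u"
    using uc spectral_on_U[OF u] k
    by (simp add: Au add_mult_distrib_mat_vec[of _ n n] smult_mat_mult_vec[of _ n n])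
  finally show "(scale t * A * scale (inverse t)) *\<^sub>v u = ((1 - t) \<cdot>\<^sub>m Kinv + t \<cdot>\<^sub>m A) *\<^sub>v u" .
qed (auto intro!: mult_carrier_mat)

lemma ES_A_conjugate_ES_far:
  assumes t: "t \<noteq> 0" and i: "i \<le> d" and j: "j \<le> d" "j + 1 < i \<or> i + 1 < j"
    and v: "v \<in> carrier_vec n"
  shows "ES.E j *\<^sub>v (scale t *\<^sub>v (A *\<^sub>v (scale (inverse t) *\<^sub>v (ES.E i *\<^sub>v v)))) = 0\<^sub>v n"
proof -
  let ?y = "ES.E i *\<^sub>v v"
  have y: "?y \<in> carrier_vec n" using v by simp
  have "scale t *\<^sub>v (A *\<^sub>v (scale (inverse t) *\<^sub>v ?y)) = (scale t * A * scale (inverse t)) *\<^sub>v ?y"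
    by (rule assoc_mult_mat_mat_vec[symmetric]) (use y in auto)
  also have "scale t * A * scale (inverse t) = (1 - t) \<cdot>\<^sub>m Kinv + t \<cdot>\<^sub>m A" by (rule A_conjugate[OF t])
  also have "((1 - t) \<cdot>\<^sub>m Kinv + t \<cdot>\<^sub>m A) *\<^sub>v ?y = (1 - t) \<cdot>\<^sub>v (Kinv *\<^sub>v ?y) + t \<cdot>\<^sub>v (A *\<^sub>v ?y)"
    using y by (simp add: add_mult_distrib_mat_vec[of _ n n] smult_mat_mult_vec[of _ n n])
  finally have conj: "scale t *\<^sub>v (A *\<^sub>v (scale (inverse t) *\<^sub>v ?y)) = (1 - t) \<cdot>\<^sub>v (Kinv *\<^sub>v ?y) + t \<cdot>\<^sub>v (A *\<^sub>v ?y)" .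
  have "ths j + - q\<^sup>2 * ths i \<noteq> 0" using q2_mult_ths_neq[of j i] j by auto
  then have Kinv_part: "ES.E j *\<^sub>v (Kinv *\<^sub>v ?y) = 0\<^sub>v n"
    using i j v As_Kinv_commutation by (intro ES.idem_mult_idem_eq_zero_if_commutation) auto
  have A_part: "ES.E j *\<^sub>v (A *\<^sub>v ?y) = 0\<^sub>v n" using ES_A_ES_far i j v by simp
  show ?thesis
    using y Kinv_part A_part by (simp add: conj mult_add_distrib_mat_vec[of _ n n] mult_mat_vec[of _ n n])
qed

lemma A_maps_B_star_idem:
  assumes t: "t \<noteq> 0" and i: "i \<le> d"
  shows "map_image A (mat_image n (prim_idem n d (t \<cdot>\<^sub>m As + (1 - t) \<cdot>\<^sub>m K) ths i))
    \<subseteq> nbr_sum n d (t \<cdot>\<^sub>m As + (1 - t) \<cdot>\<^sub>m K) ths i"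
proof -
  let ?D = "scale t" and ?Di = "scale (inverse t)"
  have DDi: "?D * ?Di = 1\<^sub>m n" and DiD: "?Di * ?D = 1\<^sub>m n"
    using scale_mult_scale_inverse[of t] scale_mult_scale_inverse[of "inverse t"] t by simp_all
  interpret EB: eigen_decomp n d "?Di * As * ?D" ths
    by (rule ES.conjugate[OF EK.spectral_mat_carrier EK.spectral_mat_carrier DiD DDi])
  have "map_image A (mat_image n (EB.E i)) \<subseteq> nbr_sum n d (?Di * As * ?D) ths i"
  proof (rule EB.map_image_subset_nbr_sum[OF carrier_A i])
    fix j and v :: "'a vec" assume j: "j \<le> d" "j + 1 < i \<or> i + 1 < j" and v: "v \<in> carrier_vec n"
    have "EB.E j *\<^sub>v (A *\<^sub>v (EB.E i *\<^sub>v v))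
        = ?Di *\<^sub>v (ES.E j *\<^sub>v (?D *\<^sub>v (A *\<^sub>v (?Di *\<^sub>v (ES.E i *\<^sub>v (?D *\<^sub>v v))))))"
      using v i j by (simp add: ES.idem_conjugate[OF EK.spectral_mat_carrier EK.spectral_mat_carrier DiD DDi])
    then show "EB.E j *\<^sub>v (A *\<^sub>v (EB.E i *\<^sub>v v)) = 0\<^sub>v n"
      using ES_A_conjugate_ES_far[OF t i j, of "?D *\<^sub>v v"] v by simp
  qed
  then show ?thesis by (simp add: B_star_conjugate[OF t])
qed

end

theorem lemma7p13:
  fixes n d :: nat and q t :: "'a::field" and A As K :: "'a mat"
  assumes "alg_closed_field TYPE('a)"
    and "n > 0"
    and "q \<noteq> 0" and "\<forall>m::nat. m > 0 \<longrightarrow> q ^ m \<noteq> 1"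
    and "d \<ge> 1"
    and "tridiagonal_system n d A (\<lambda>i. q powi (2 * int i - int d))
                               As (\<lambda>i. q powi (int d - 2 * int i))"
    and "q_serre q A As"
    and "K \<in> carrier_mat n n"
    and "\<forall>i\<le>d. \<forall>u \<in> split_comp n d A (\<lambda>i. q powi (2 * int i - int d))
                                As (\<lambda>i. q powi (int d - 2 * int i)) i.
            K *\<^sub>v u = (q powi (int d - 2 * int i)) \<cdot>\<^sub>v u"
  shows "\<forall>i\<le>d.
     map_image (t \<cdot>\<^sub>m As + (1 - t) \<cdot>\<^sub>m K)
        (mat_image n (prim_idem n d A (\<lambda>i. q powi (2 * int i - int d)) i))
       \<subseteq> nbr_sum n d A (\<lambda>i. q powi (2 * int i - int d)) i
   \<and> map_image A
        (mat_image n (prim_idem n d (t \<cdot>\<^sub>m As + (1 - t) \<cdot>\<^sub>m K) (\<lambda>i. q powi (int d - 2 * int i)) i))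
       \<subseteq> nbr_sum n d (t \<cdot>\<^sub>m As + (1 - t) \<cdot>\<^sub>m K) (\<lambda>i. q powi (int d - 2 * int i)) i"
proof -
  interpret q_tridiagonal_sys n d A As "\<lambda>i. q powi (2 * int i - int d)" "\<lambda>i. q powi (int d - 2 * int i)" q K
    by unfold_locales (use assms in auto)
  show ?thesis
  proof (intro allI impI conjI)
    fix i assume i: "i \<le> d"
    show "map_image (t \<cdot>\<^sub>m As + (1 - t) \<cdot>\<^sub>m K) (mat_image n (EA.E i)) \<subseteq> nbr_sum n d A (\<lambda>i. q powi (2 * int i - int d)) i"
      by (rule B_star_maps_A_idem[OF i])
    show "map_image A (mat_image n (prim_idem n d (t \<cdot>\<^sub>m As + (1 - t) \<cdot>\<^sub>m K) (\<lambda>i. q powi (int d - 2 * int i)) i))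
      \<subseteq> nbr_sum n d (t \<cdot>\<^sub>m As + (1 - t) \<cdot>\<^sub>m K) (\<lambda>i. q powi (int d - 2 * int i)) i"
    proof (cases "t = 0")
      case True
      then have "t \<cdot>\<^sub>m As + (1 - t) \<cdot>\<^sub>m K = K" by (intro eq_matI) auto
      then show ?thesis using A_maps_K_idem[OF i] by simp
    next
      case False
      then show ?thesis by (rule A_maps_B_star_idem[OF _ i])
    qed
  qed
qed

end
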